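(* Let $f:\mathbb{C}\to\mathbb{C}$ be holomorphic, $W(z)=|f(z)|^2$ on $\mathbb{R}^2\cong\mathbb{C}$, and let $e$ be a heteroclinic orbit connecting two distinct nondegenerate zeros $a^-,a^+$ of $W$. Let $m\in\mathbb{C}$, $|m|=1$, be such that $e'=\sqrt{2}\,m\,\overline{f(e)}$ on $\mathbb{R}$ (such $m$ exists). Then for every $h\in H^1(\mathbb{R};\mathbb{R}^2)\cong H^1(\mathbb{R};\mathbb{C})$, $$\int_{\mathbb{R}}\big(|h'|^2+h^\top D^2W(e)h\big)\,dx=\int_{\mathbb{R}}\big|h'-\sqrt{2}\,m\,\overline{f'(e)\,h}\big|^2\,dx .$$
   Context: We identify $\mathbb{R}^2$ with $\mathbb{C}$ via $(u_1,u_2)\mapsto u_1+iu_2$; in the left side $h$ is viewed as a vector in $\mathbb{R}^2$, in the right side as a complex-valued function, and products like $f'(e)h$ are complex multiplications. A zero $a$ of $W$ is nondegenerate if $D^2W(a)$ is positive definite. A heteroclinic orbit connecting $a^-\neq a^+$ (zeros of $W$) is a solution $e\in C^2(\mathbb{R};\mathbb{R}^2)$ of $e''=\nabla W(e)$ on $\mathbb{R}$ with $e(x)\to a^\pm$ as $x\to\pm\infty$. *)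

theory Defs
  imports "HOL-Analysis.Analysis"
begin

text \<open>We identify R^2 with the type complex (a euclidean_space with inner product
  (u1+iu2) . (v1+iv2) = u1 v1 + u2 v2).\<close>

definition grad :: "(complex \<Rightarrow> real) \<Rightarrow> complex \<Rightarrow> complex" where
  "grad W z = (THE g. (W has_derivative (\<lambda>v. g \<bullet> v)) (at z))"

text \<open>Hessian D^2W(z), as the (linear) derivative of the gradient; h^T D^2W(z) h = h . hess W z h.\<close>
definition hess :: "(complex \<Rightarrow> real) \<Rightarrow> complex \<Rightarrow> complex \<Rightarrow> complex" where
  "hess W z = (THE L. (grad W has_derivative L) (at z))"

definition nondegenerate_zero :: "(complex \<Rightarrow> real) \<Rightarrow> complex \<Rightarrow> bool" where
  "nondegenerate_zero W a \<longleftrightarrow> W a = 0 \<and> (\<forall>v. v \<noteq> 0 \<longrightarrow> v \<bullet> hess W a v > 0)"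

definition heteroclinic :: "(complex \<Rightarrow> real) \<Rightarrow> complex \<Rightarrow> complex \<Rightarrow> (real \<Rightarrow> complex)
    \<Rightarrow> (real \<Rightarrow> complex) \<Rightarrow> (real \<Rightarrow> complex) \<Rightarrow> bool" where
  "heteroclinic W am ap e e' e'' \<longleftrightarrow>
     (\<forall>x. (e has_vector_derivative e' x) (at x)) \<and>
     (\<forall>x. (e' has_vector_derivative e'' x) (at x)) \<and>
     continuous_on UNIV e'' \<and>
     (\<forall>x. e'' x = grad W (e x)) \<and>
     (e \<longlongrightarrow> am) at_bot \<and> (e \<longlongrightarrow> ap) at_top"

definition test_fun :: "(real \<Rightarrow> real) \<Rightarrow> bool" where
  "test_fun \<phi> \<longleftrightarrow>
     (\<forall>n x. ((deriv ^^ n) \<phi> has_real_derivative (deriv ^^ Suc n) \<phi> x) (at x)) \<and>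
     compact (closure {x. \<phi> x \<noteq> 0})"

definition square_integrable :: "(real \<Rightarrow> complex) \<Rightarrow> bool" where
  "square_integrable h \<longleftrightarrow> h \<in> borel_measurable lborel \<and> integrable lborel (\<lambda>x. (cmod (h x))\<^sup>2)"

definition H1_weak :: "(real \<Rightarrow> complex) \<Rightarrow> (real \<Rightarrow> complex) \<Rightarrow> bool" where
  "H1_weak h g \<longleftrightarrow> square_integrable h \<and> square_integrable g \<and>
     (\<forall>\<phi>. test_fun \<phi> \<longrightarrow>
        (\<integral>x. h x * complex_of_real (deriv \<phi> x) \<partial>lborel) = - (\<integral>x. g x * complex_of_real (\<phi> x) \<partial>lborel))"

end

theory Submission
  imports Defs "HOL-Computational_Algebra.Polynomial" "HOL-Complex_Analysis.Complex_Analysis"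
begin

(* With W = |f|^2 and e' = sqrt 2 m conj (f e), the Hessian of W along e completes the square:
   pointwise, |h'|^2 + h . D^2W(e) h equals |h' - sqrt 2 m conj (f'(e) h)|^2 plus
   sqrt 2 Re (conj m (h^2 f'(e))'). It remains to see that (h^2 f'(e))' integrates to zero.
   By the du Bois-Reymond lemma an H^1 function agrees a.e. with an absolutely continuous
   primitive K of its weak derivative, so the integral over [a, b] is the boundary term
   K^2 f'(e) |_a^b. Since e is bounded, f'(e) and its derivative are bounded; and K^2 has
   limits at +-infinity (its derivative 2 K K' is integrable) which must vanish because
   |K|^2 is integrable. *)

section \<open>Smooth functions and test functions\<close>

fun Ck_differentiable :: "nat \<Rightarrow> (real \<Rightarrow> real) \<Rightarrow> bool" where
  "Ck_differentiable 0 f = True"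
| "Ck_differentiable (Suc k) f =
     (\<exists>f'. (\<forall>x. (f has_real_derivative f' x) (at x)) \<and> Ck_differentiable k f')"

definition smooth :: "(real \<Rightarrow> real) \<Rightarrow> bool" where
  "smooth f \<longleftrightarrow> (\<forall>k. Ck_differentiable k f)"

lemma Ck_differentiable_SucD: "Ck_differentiable (Suc k) f \<Longrightarrow> Ck_differentiable k f"
  by (induction k arbitrary: f) auto

lemma Ck_differentiable_const: "Ck_differentiable k (\<lambda>x. c)"
proof (induction k arbitrary: c)
  case (Suc k)
  then show ?case
    by (metis Ck_differentiable.simps(2) DERIV_const)
qed simp

lemma Ck_differentiable_add:
  "Ck_differentiable k f \<Longrightarrow> Ck_differentiable k g \<Longrightarrow> Ck_differentiable k (\<lambda>x. f x + g x)"
proof (induction k arbitrary: f g)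
  case (Suc k)
  then obtain f' g' where f: "\<forall>x. (f has_real_derivative f' x) (at x)" "Ck_differentiable k f'"
    and g: "\<forall>x. (g has_real_derivative g' x) (at x)" "Ck_differentiable k g'" by auto
  have "\<forall>x. ((\<lambda>x. f x + g x) has_real_derivative f' x + g' x) (at x)"
    using f g by (auto intro: derivative_intros)
  with Suc.IH f g show ?case by auto
qed simp

lemma Ck_differentiable_mult:
  "Ck_differentiable k f \<Longrightarrow> Ck_differentiable k g \<Longrightarrow> Ck_differentiable k (\<lambda>x. f x * g x)"
proof (induction k arbitrary: f g)
  case (Suc k)
  then obtain f' g' where f: "\<forall>x. (f has_real_derivative f' x) (at x)" "Ck_differentiable k f'"
    and g: "\<forall>x. (g has_real_derivative g' x) (at x)" "Ck_differentiable k g'" by auto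
  have "Ck_differentiable k f" "Ck_differentiable k g"
    using Suc.prems Ck_differentiable_SucD by blast+
  then have "Ck_differentiable k (\<lambda>x. f' x * g x + f x * g' x)"
    using Suc.IH f g by (intro Ck_differentiable_add) auto
  moreover have "\<forall>x. ((\<lambda>x. f x * g x) has_real_derivative f' x * g x + f x * g' x) (at x)"
    using f g by (auto intro!: derivative_eq_intros)
  ultimately show ?case by auto
qed simp

lemma Ck_differentiable_affine: "Ck_differentiable k f \<Longrightarrow> Ck_differentiable k (\<lambda>x. f (c * x + d))"
proof (induction k arbitrary: f)
  case (Suc k)
  then obtain f' where f: "\<forall>x. (f has_real_derivative f' x) (at x)" "Ck_differentiable k f'" by auto
  have "\<forall>x. ((\<lambda>x. f (c * x + d)) has_real_derivative f' (c * x + d) * c) (at x)"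
    using f by (auto intro!: derivative_eq_intros DERIV_chain2[where f=f])
  moreover have "Ck_differentiable k (\<lambda>x. f' (c * x + d) * c)"
    using Suc.IH f by (intro Ck_differentiable_mult Ck_differentiable_const) auto
  ultimately show ?case by auto
qed simp

lemma smooth_const: "smooth (\<lambda>x. c)"
  by (simp add: smooth_def Ck_differentiable_const)

lemma smooth_add: "smooth f \<Longrightarrow> smooth g \<Longrightarrow> smooth (\<lambda>x. f x + g x)"
  by (simp add: smooth_def Ck_differentiable_add)

lemma smooth_mult: "smooth f \<Longrightarrow> smooth g \<Longrightarrow> smooth (\<lambda>x. f x * g x)"
  by (simp add: smooth_def Ck_differentiable_mult)

lemma smooth_affine: "smooth f \<Longrightarrow> smooth (\<lambda>x. f (c * x + d))"
  by (simp add: smooth_def Ck_differentiable_affine)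

lemma smooth_diff:
  assumes "smooth f" "smooth g"
  shows "smooth (\<lambda>x. f x - g x)"
proof -
  have "smooth (\<lambda>x. f x + (-1) * g x)" by (intro smooth_add smooth_mult smooth_const assms)
  then show ?thesis by simp
qed

lemma smooth_power: "smooth f \<Longrightarrow> smooth (\<lambda>x. f x ^ n)"
  by (induction n) (auto intro: smooth_mult smooth_const)

lemma smooth_antiderivative:
  assumes "\<And>x. (F has_real_derivative f x) (at x)" "smooth f"
  shows "smooth F"
  unfolding smooth_def
proof
  fix k show "Ck_differentiable k F"
    using assms by (cases k) (auto simp: smooth_def)
qed

lemma smooth_has_real_derivative:
  assumes "smooth f"
  shows "(f has_real_derivative deriv f x) (at x)"
proof -
  from assms have "Ck_differentiable (Suc 0) f" by (simp add: smooth_def)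
  then obtain f' where f': "\<forall>x. (f has_real_derivative f' x) (at x)" by auto
  then have "deriv f x = f' x" by (simp add: DERIV_imp_deriv)
  with f' show ?thesis by simp
qed

lemma smooth_deriv:
  assumes "smooth f"
  shows "smooth (deriv f)"
  unfolding smooth_def
proof
  fix k
  from assms have "Ck_differentiable (Suc k) f" by (simp add: smooth_def)
  then obtain f' where "\<forall>x. (f has_real_derivative f' x) (at x)" "Ck_differentiable k f'" by auto
  moreover from this have "deriv f = f'" by (auto intro: DERIV_imp_deriv)
  ultimately show "Ck_differentiable k (deriv f)" by simp
qed

lemma smooth_imp_continuous: "smooth f \<Longrightarrow> continuous_on UNIV f"
  using smooth_has_real_derivative by (meson DERIV_isCont continuous_at_imp_continuous_on)

lemma test_funI:
  assumes "smooth f" "compact (closure {x. f x \<noteq> 0})"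
  shows "test_fun f"
proof -
  have "smooth ((deriv ^^ n) f)" for n
    by (induction n) (use assms smooth_deriv in auto)
  then show ?thesis
    unfolding test_fun_def using smooth_has_real_derivative assms(2) by simp
qed

lemma test_fun_has_real_derivative: "test_fun \<phi> \<Longrightarrow> (\<phi> has_real_derivative deriv \<phi> x) (at x)"
  unfolding test_fun_def by (metis funpow_0 funpow_Suc_right o_apply)

lemma test_fun_continuous: "test_fun \<phi> \<Longrightarrow> continuous_on UNIV \<phi>"
  using test_fun_has_real_derivative by (meson DERIV_isCont continuous_at_imp_continuous_on)

lemma test_fun_deriv_continuous: "test_fun \<phi> \<Longrightarrow> continuous_on UNIV (deriv \<phi>)"
  unfolding test_fun_def
  by (metis DERIV_isCont One_nat_def continuous_at_imp_continuous_on funpow.simps(2)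
      funpow_0 o_apply)

lemma test_fun_vanishes_outside:
  assumes "test_fun \<phi>"
  obtains a b where "a < b" "\<And>x. x \<notin> {a<..<b} \<Longrightarrow> \<phi> x = 0 \<and> deriv \<phi> x = 0"
proof -
  have "bounded {x. \<phi> x \<noteq> 0}" using assms unfolding test_fun_def by (simp add: compact_closure)
  then obtain R where R: "\<And>x. \<phi> x \<noteq> 0 \<Longrightarrow> \<bar>x\<bar> \<le> R" unfolding bounded_real by blast
  have zero: "\<phi> x = 0 \<and> deriv \<phi> x = 0" if x: "R < \<bar>x\<bar>" for x
  proof -
    have outer: "\<phi> y = 0" if "y \<in> {y. R < \<bar>y\<bar>}" for y using R[of y] that by force
    have "open {y::real. R < \<bar>y\<bar>}" by (intro open_Collect_less continuous_intros)
    with outer have "(\<phi> has_real_derivative 0) (at x)"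
      by (intro has_field_derivative_transform_within_open[OF DERIV_const[of 0]]) (use x in auto)
    then show ?thesis using outer x by (auto intro: DERIV_imp_deriv)
  qed
  show ?thesis
  proof (rule that[of "- \<bar>R\<bar> - 1" "\<bar>R\<bar> + 1"])
    fix x :: real assume "x \<notin> {- \<bar>R\<bar> - 1<..<\<bar>R\<bar> + 1}"
    then have "R < \<bar>x\<bar>" by auto
    then show "\<phi> x = 0 \<and> deriv \<phi> x = 0" by (rule zero)
  qed simp
qed

definition exp_neg_inverse :: "real \<Rightarrow> real" where
  "exp_neg_inverse x = (if x > 0 then exp (- 1 / x) else 0)"

(* For x > 0 the derivative of p(1/x) exp(-1/x) is (p(1/x) - p'(1/x)) exp(-1/x) / x^2. *)
fun exp_neg_inverse_poly :: "nat \<Rightarrow> real poly" where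
  "exp_neg_inverse_poly 0 = 1"
| "exp_neg_inverse_poly (Suc n) =
     [:0, 0, 1:] * (exp_neg_inverse_poly n - pderiv (exp_neg_inverse_poly n))"

definition exp_neg_inverse_deriv :: "nat \<Rightarrow> real \<Rightarrow> real" where
  "exp_neg_inverse_deriv n x =
     (if x > 0 then poly (exp_neg_inverse_poly n) (1 / x) * exp (- 1 / x) else 0)"

lemma poly_div_exp_tendsto_0: "((\<lambda>t::real. poly p t / exp t) \<longlongrightarrow> 0) at_top"
proof -
  have "((\<lambda>t. \<Sum>i\<le>degree p. coeff p i * (t ^ i / exp t)) \<longlongrightarrow> (\<Sum>i\<le>degree p. coeff p i * 0)) at_top"
    by (intro tendsto_sum tendsto_mult tendsto_const) (use tendsto_power_div_exp_0 in auto)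
  then show ?thesis
    by (simp add: poly_altdef sum_divide_distrib)
qed

lemma exp_neg_inverse_deriv_at_0:
  "(exp_neg_inverse_deriv n has_real_derivative 0) (at 0)"
proof -
  let ?q = "\<lambda>y. (exp_neg_inverse_deriv n y - exp_neg_inverse_deriv n 0) / (y - 0)"
  have "((\<lambda>y. poly (pCons 0 (exp_neg_inverse_poly n)) (inverse y) / exp (inverse y)) \<longlongrightarrow> 0)
      (at_right 0)"
    by (rule filterlim_compose[OF poly_div_exp_tendsto_0 filterlim_inverse_at_top_right])
  then have right: "(?q \<longlongrightarrow> 0) (at_right 0)"
    by (rule Lim_transform_eventually, intro eventually_at_rightI[where b=1])
      (auto simp: exp_neg_inverse_deriv_def exp_minus field_simps)
  have "\<forall>\<^sub>F y in at_left (0::real). 0 = ?q y"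
    by (rule eventually_at_leftI[where a="-1"]) (auto simp: exp_neg_inverse_deriv_def)
  then have left: "(?q \<longlongrightarrow> 0) (at_left 0)"
    by (rule Lim_transform_eventually[OF tendsto_const])
  show ?thesis
    unfolding has_field_derivative_iff using left right by (simp add: filterlim_at_split)
qed

lemma exp_neg_inverse_deriv_has_real_derivative:
  "(exp_neg_inverse_deriv n has_real_derivative exp_neg_inverse_deriv (Suc n) x) (at x)"
proof (cases "x > 0")
  case True
  let ?p = "exp_neg_inverse_poly n"
  have d: "((\<lambda>x. poly ?p (1 / x) * exp (- 1 / x)) has_real_derivative
      poly (pderiv ?p) (1/x) * (- 1 / x^2) * exp (- 1 / x) + poly ?p (1/x) * (exp (- 1 / x) * (1 / x^2)))
      (at x)"
    using True by (auto intro!: derivative_eq_intros DERIV_chain2[where f="poly ?p"] poly_DERIV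
        simp: power2_eq_square field_simps)
  have e: "poly (pderiv ?p) (1/x) * (- 1 / x^2) * exp (- 1 / x)
      + poly ?p (1/x) * (exp (- 1 / x) * (1 / x^2)) = exp_neg_inverse_deriv (Suc n) x"
    using True by (simp add: exp_neg_inverse_deriv_def algebra_simps power2_eq_square)
  show ?thesis
    apply (rule has_field_derivative_transform_within_open[where S="{0<..}"])
    using d e True by (auto simp: exp_neg_inverse_deriv_def)
next
  case False
  show ?thesis
  proof (cases "x < 0")
    case True
    have "((\<lambda>x. 0) has_real_derivative 0) (at x)" by simp
    then have "(exp_neg_inverse_deriv n has_real_derivative 0) (at x)"
      apply (rule has_field_derivative_transform_within_open[where S="{..<0}"])
      using True by (auto simp: exp_neg_inverse_deriv_def)
    moreover have "exp_neg_inverse_deriv (Suc n) x = 0"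
      using True by (simp add: exp_neg_inverse_deriv_def)
    ultimately show ?thesis by simp
  next
    case False
    with \<open>\<not> x > 0\<close> have "x = 0" by simp
    moreover have "exp_neg_inverse_deriv (Suc n) 0 = 0" by (simp add: exp_neg_inverse_deriv_def)
    ultimately show ?thesis using exp_neg_inverse_deriv_at_0 by simp
  qed
qed

lemma smooth_exp_neg_inverse: "smooth exp_neg_inverse"
proof -
  have "Ck_differentiable k (exp_neg_inverse_deriv n)" for k n
  proof (induction k arbitrary: n)
    case (Suc k)
    then show ?case using exp_neg_inverse_deriv_has_real_derivative by auto
  qed simp
  moreover have "exp_neg_inverse_deriv 0 = exp_neg_inverse"
    by (auto simp: exp_neg_inverse_deriv_def exp_neg_inverse_def fun_eq_iff)
  ultimately show ?thesis by (metis smooth_def)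
qed

lemma exp_neg_inverse_bounds: "0 \<le> exp_neg_inverse x" "exp_neg_inverse x \<le> 1"
  by (auto simp: exp_neg_inverse_def)

lemma exp_neg_inverse_pos_iff: "exp_neg_inverse x > 0 \<longleftrightarrow> x > 0"
  by (auto simp: exp_neg_inverse_def)

definition bump :: "real \<Rightarrow> real" where
  "bump x = exp_neg_inverse x * exp_neg_inverse (1 - x)"

lemma smooth_bump: "smooth bump"
proof -
  have "smooth (\<lambda>x. exp_neg_inverse x * exp_neg_inverse ((-1) * x + 1))"
    by (intro smooth_mult smooth_exp_neg_inverse smooth_affine)
  then show ?thesis by (simp add: bump_def[abs_def])
qed

lemma bump_bounds: "0 \<le> bump x" "bump x \<le> 1"
  using exp_neg_inverse_bounds[of x] exp_neg_inverse_bounds[of "1 - x"]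
  by (auto simp: bump_def intro: mult_le_one)

lemma bump_pos_iff: "0 < bump x \<longleftrightarrow> x \<in> {0<..<1}"
  using exp_neg_inverse_pos_iff[of x] exp_neg_inverse_pos_iff[of "1 - x"]
    exp_neg_inverse_bounds[of x] exp_neg_inverse_bounds[of "1 - x"]
  by (auto simp: bump_def zero_less_mult_iff)

definition indicator_approx :: "real \<Rightarrow> real \<Rightarrow> nat \<Rightarrow> real \<Rightarrow> real" where
  "indicator_approx a b n x = 1 - (1 - bump ((x - a) / (b - a))) ^ n"

lemma rescale_mem_unit_interval_iff:
  fixes a b x :: real
  assumes "a < b"
  shows "(x - a) / (b - a) \<in> {0<..<1} \<longleftrightarrow> x \<in> {a<..<b}"
  using assms by (auto simp: divide_less_eq_1_pos zero_less_divide_iff)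

lemma smooth_indicator_approx: "smooth (indicator_approx a b n)"
proof -
  have rescale: "(x - a) / (b - a) = (1 / (b - a)) * x + (- a / (b - a))" for x
    by (simp add: diff_divide_distrib)
  show ?thesis
    unfolding indicator_approx_def[abs_def] rescale
    by (intro smooth_diff smooth_const smooth_power smooth_affine smooth_bump)
qed

lemma continuous_on_indicator_approx: "continuous_on UNIV (indicator_approx a b n)"
  by (rule smooth_imp_continuous[OF smooth_indicator_approx])

lemma indicator_approx_bounds: "0 \<le> indicator_approx a b n x" "indicator_approx a b n x \<le> 1"
  using bump_bounds[of "(x - a) / (b - a)"] by (auto simp: indicator_approx_def power_le_one)

lemma indicator_approx_eq_0:
  assumes "a < b" "x \<notin> {a<..<b}"
  shows "indicator_approx a b n x = 0"
proof -
  have "\<not> 0 < bump ((x - a) / (b - a))"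
    using assms rescale_mem_unit_interval_iff bump_pos_iff by blast
  then have "bump ((x - a) / (b - a)) = 0"
    using bump_bounds(1)[of "(x - a) / (b - a)"] by linarith
  then show ?thesis by (simp add: indicator_approx_def)
qed

lemma indicator_approx_le_indicator:
  "a < b \<Longrightarrow> indicator_approx a b n x \<le> indicator {a<..<b} x"
  using indicator_approx_bounds[of a b n x] indicator_approx_eq_0[of a b x n]
  by (auto simp: indicator_def)

lemma indicator_approx_LIMSEQ:
  assumes "a < b"
  shows "(\<lambda>n. indicator_approx a b n x) \<longlonglongrightarrow> indicator {a<..<b} x"
proof (cases "x \<in> {a<..<b}")
  case True
  let ?y = "(x - a) / (b - a)"
  have "(\<lambda>n. (1 - bump ?y) ^ n) \<longlonglongrightarrow> 0"
    using True bump_bounds[of ?y] bump_pos_iff[of ?y] rescale_mem_unit_interval_iff[OF assms]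
    by (intro LIMSEQ_power_zero) auto
  then have "(\<lambda>n. 1 - (1 - bump ?y) ^ n) \<longlonglongrightarrow> 1 - 0"
    by (intro tendsto_diff tendsto_const)
  with True show ?thesis by (simp add: indicator_approx_def)
qed (simp add: indicator_approx_eq_0 assms)

lemma integrable_continuous_vanishing_outside:
  fixes f :: "real \<Rightarrow> 'b::{banach, second_countable_topology}"
  assumes "continuous_on UNIV f" "\<And>x. x \<notin> {a..b} \<Longrightarrow> f x = 0"
  shows "integrable lborel f"
proof -
  have "integrable lborel (\<lambda>x. indicat_real {a..b} x *\<^sub>R f x)"
    by (rule borel_integrable_compact) (auto intro: continuous_on_subset[OF assms(1)])
  moreover have "(\<lambda>x. indicat_real {a..b} x *\<^sub>R f x) = f"
    using assms(2) by (auto simp: fun_eq_iff indicator_def)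
  ultimately show ?thesis by simp
qed

lemma interval_integral_eq_0_outside:
  fixes \<psi> :: "real \<Rightarrow> real"
  assumes outside: "\<And>x. x \<notin> {a<..<b} \<Longrightarrow> \<psi> x = 0"
    and integral_0: "(\<integral>x. \<psi> x \<partial>lborel) = 0" and x: "x \<notin> {a..b}"
  shows "(LBINT t=ereal a..ereal x. \<psi> t) = 0"
proof (cases "x \<le> a")
  case True
  have "(LBINT t=ereal a..ereal x. \<psi> t) = - (LBINT t=x..a. \<psi> t)"
    by (rule interval_integral_endpoints_reverse)
  also have "(LBINT t=x..a. \<psi> t) = (LBINT t:{x..a}. \<psi> t)"
    using True by (rule interval_integral_Icc)
  also have "\<dots> = 0"
    unfolding set_lebesgue_integral_def using outside
    by (subst Bochner_Integration.integral_cong[where g="\<lambda>x. 0"]) (auto simp: indicator_def)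
  finally show ?thesis by simp
next
  case False
  then have "(LBINT t=ereal a..ereal x. \<psi> t) = (LBINT t:{a..x}. \<psi> t)"
    by (intro interval_integral_Icc) simp
  also have "\<dots> = (\<integral>t. \<psi> t \<partial>lborel)"
    unfolding set_lebesgue_integral_def
  proof (intro Bochner_Integration.integral_cong refl)
    fix t show "indicat_real {a..x} t *\<^sub>R \<psi> t = \<psi> t"
      using outside[of t] x False by (cases "t \<in> {a<..<b}") (auto simp: indicator_def)
  qed
  finally show ?thesis using integral_0 by simp
qed

lemma test_fun_antiderivative:
  fixes \<psi> :: "real \<Rightarrow> real"
  assumes smooth: "smooth \<psi>" and outside: "\<And>x. x \<notin> {a<..<b} \<Longrightarrow> \<psi> x = 0"
    and integral_0: "(\<integral>x. \<psi> x \<partial>lborel) = 0"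
  obtains \<Phi> where "test_fun \<Phi>" "deriv \<Phi> = \<psi>"
proof -
  define \<Phi> :: "real \<Rightarrow> real" where "\<Phi> x = (LBINT t=ereal a..ereal x. \<psi> t)" for x
  have cont: "continuous_on UNIV \<psi>" using smooth_imp_continuous smooth by blast
  have \<Phi>_deriv: "(\<Phi> has_real_derivative \<psi> x) (at x)" for x
  proof -
    let ?l = "min a x - 1" and ?u = "max a x + 1"
    have "((\<lambda>u. LBINT t=ereal a..ereal u. \<psi> t) has_vector_derivative \<psi> x) (at x within {?l..?u})"
      by (rule interval_integral_FTC2) (auto intro: continuous_on_subset[OF cont])
    moreover have "at x within {?l..?u} = at x"
      by (rule at_within_open_subset[of x "{?l<..<?u}"]) auto
    ultimately show ?thesis unfolding \<Phi>_def has_real_derivative_iff_has_vector_derivative by simp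
  qed
  have "\<Phi> x = 0" if "x \<notin> {a..b}" for x
    unfolding \<Phi>_def by (rule interval_integral_eq_0_outside[OF outside integral_0 that])
  then have "{x. \<Phi> x \<noteq> 0} \<subseteq> {a..b}" by blast
  then have "bounded {x. \<Phi> x \<noteq> 0}" by (rule bounded_subset[OF compact_imp_bounded[OF compact_Icc]])
  then have "test_fun \<Phi>"
    by (intro test_funI smooth_antiderivative[OF \<Phi>_deriv smooth]) (simp add: compact_closure)
  moreover have "deriv \<Phi> = \<psi>" using \<Phi>_deriv DERIV_imp_deriv by blast
  ultimately show ?thesis using that by blast
qed

section \<open>The du Bois-Reymond lemma\<close>

(* The rays {x<..} form an Int-stable generator of the Borel sets, so by Dynkin's lemma
   the set integral of w vanishes over every Borel set. *)
lemma AE_zero_if_set_integrals_Ioi_zero: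
  fixes w :: "real \<Rightarrow> complex"
  assumes w: "integrable lborel w"
    and Ioi: "\<And>x. (\<integral>y\<in>{x<..}. w y \<partial>lborel) = 0"
    and UNIV: "(\<integral>y. w y \<partial>lborel) = 0"
  shows "AE x in lborel. w x = 0"
proof (rule sigma_finite_measure.density_zero[OF sigma_finite_lborel w])
  fix A :: "real set" assume "A \<in> sets lborel"
  then have A: "A \<in> sigma_sets UNIV (range greaterThan)"
    by (simp add: sets_lborel borel_Ioi)
  have "{a<..} \<inter> {b<..} = {max a b<..}" for a b :: real by auto
  then have "Int_stable (range (greaterThan :: real \<Rightarrow> real set))"
    by (auto simp: Int_stable_def)
  moreover have "range greaterThan \<subseteq> Pow (UNIV::real set)" by auto
  ultimately show "(\<integral>y\<in>A. w y \<partial>lborel) = 0"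
    using A
  proof (induct rule: sigma_sets_induct_disjoint)
    case (basic A) then show ?case using Ioi by auto
  next
    case empty then show ?case by (simp add: set_lebesgue_integral_def)
  next
    case (compl A)
    have "A \<in> sets lborel"
      using compl(1) by (simp add: sets_lborel borel_Ioi)
    have "(\<integral>y\<in>UNIV - A. w y \<partial>lborel) = (\<integral>y. w y - indicator A y *\<^sub>R w y \<partial>lborel)"
      unfolding set_lebesgue_integral_def
      by (intro Bochner_Integration.integral_cong) (auto simp: indicator_def)
    also have "\<dots> = (\<integral>y. w y \<partial>lborel) - (\<integral>y\<in>A. w y \<partial>lborel)"
      unfolding set_lebesgue_integral_def using w \<open>A \<in> sets lborel\<close>
      by (intro Bochner_Integration.integral_diff integrable_mult_indicator) auto
    finally show ?case using compl UNIV by simp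
  next
    case (union F)
    have "\<And>i. F i \<in> sets lborel"
      using union(2) by (auto simp: sets_lborel borel_Ioi)
    moreover have "disjoint_family F" using union(1) .
    ultimately have "(\<integral>y\<in>(\<Union>i. F i). w y \<partial>lborel) = (\<Sum>i. (\<integral>y\<in>F i. w y \<partial>lborel))"
      using w by (intro lebesgue_integral_countable_add)
        (auto simp: disjoint_family_on_def set_integrable_def intro: integrable_mult_indicator)
    then show ?case using union by simp
  qed
qed

lemma AE_zero_if_set_integrals_Ioo_zero:
  fixes v :: "real \<Rightarrow> complex"
  assumes loc: "\<And>a b. set_integrable lborel {a..b} v"
    and Ioo: "\<And>a b. a < b \<Longrightarrow> (\<integral>y\<in>{a<..<b}. v y \<partial>lborel) = 0"
  shows "AE x in lborel. v x = 0"
proof -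
  have "AE x in lborel. indicator {-real N<..<real N} x *\<^sub>R v x = 0" for N :: nat
  proof (rule AE_zero_if_set_integrals_Ioi_zero)
    let ?w = "\<lambda>x. indicator {-real N<..<real N} x *\<^sub>R v x"
    have Ioo': "(\<integral>y\<in>{a<..<b}. v y \<partial>lborel) = 0" for a b
      using Ioo[of a b] by (cases "a < b") (auto simp: set_lebesgue_integral_def)
    have "set_integrable lborel {-real N<..<real N} v"
      by (rule set_integrable_subset[OF loc[of "-real N" "real N"]]) auto
    then show "integrable lborel ?w" by (simp add: set_integrable_def)
    show "(\<integral>y. ?w y \<partial>lborel) = 0" using Ioo' unfolding set_lebesgue_integral_def .
    fix x
    have "(\<integral>y\<in>{x<..}. ?w y \<partial>lborel) = (\<integral>y\<in>{max x (-real N)<..<real N}. v y \<partial>lborel)"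
      unfolding set_lebesgue_integral_def
      by (intro Bochner_Integration.integral_cong) (auto simp: indicator_def)
    then show "(\<integral>y\<in>{x<..}. ?w y \<partial>lborel) = 0" using Ioo' by simp
  qed
  then have "AE x in lborel. \<forall>N::nat. indicator {-real N<..<real N} x *\<^sub>R v x = 0"
    by (subst AE_all_countable) auto
  then show ?thesis
  proof (rule AE_mp, intro AE_I2 impI)
    fix x assume zero: "\<forall>N::nat. indicator {-real N<..<real N} x *\<^sub>R v x = 0"
    obtain N :: nat where "\<bar>x\<bar> < real N" using reals_Archimedean2 by blast
    then have "x \<in> {-real N<..<real N}" by (auto simp: abs_less_iff)
    with zero[rule_format, of N] show "v x = 0" by simp
  qed
qed

lemma integrable_mult_bounded:
  fixes f g :: "'a \<Rightarrow> complex"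
  assumes "integrable M f" "g \<in> borel_measurable M" "\<And>x. norm (g x) \<le> C"
  shows "integrable M (\<lambda>x. f x * g x)"
proof (rule Bochner_Integration.integrable_bound[where f="\<lambda>x. \<bar>C\<bar> * norm (f x)"])
  show "integrable M (\<lambda>x. \<bar>C\<bar> * norm (f x))" using assms(1) by auto
  show "(\<lambda>x. f x * g x) \<in> borel_measurable M" using assms(1,2) by auto
  show "AE x in M. norm (f x * g x) \<le> norm (\<bar>C\<bar> * norm (f x))"
  proof (intro AE_I2)
    fix x
    have "norm (f x * g x) \<le> norm (f x) * \<bar>C\<bar>"
      unfolding norm_mult using assms(3)[of x] by (intro mult_left_mono) auto
    then show "norm (f x * g x) \<le> norm (\<bar>C\<bar> * norm (f x))" by (simp add: mult.commute)
  qed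
qed

lemma continuous_vanishing_outside_bounded:
  fixes c :: "real \<Rightarrow> 'b::real_normed_vector"
  assumes "continuous_on UNIV c" "\<And>x. x \<notin> {a..b} \<Longrightarrow> c x = 0"
  obtains B where "\<And>x. norm (c x) \<le> B"
proof -
  have "compact (c ` {a..b})"
    by (rule compact_continuous_image) (auto intro: continuous_on_subset[OF assms(1)])
  then obtain B where "\<forall>y\<in>c ` {a..b}. norm y \<le> B"
    using compact_imp_bounded bounded_iff by metis
  then have "norm (c x) \<le> max B 0" for x
    using assms(2)[of x] by (cases "x \<in> {a..b}") (force simp: le_max_iff_disj)+
  then show ?thesis using that by blast
qed

lemma integrable_mult_continuous_vanishing_outside:
  fixes f c :: "real \<Rightarrow> complex"
  assumes f: "set_integrable lborel {a..b} f" and c: "continuous_on UNIV c"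
    and outside: "\<And>x. x \<notin> {a..b} \<Longrightarrow> c x = 0"
  shows "integrable lborel (\<lambda>x. f x * c x)"
proof -
  obtain B where "\<And>x. norm (c x) \<le> B"
    using continuous_vanishing_outside_bounded[OF c outside] by blast
  then have "integrable lborel (\<lambda>x. (indicator {a..b} x *\<^sub>R f x) * c x)"
    using f unfolding set_integrable_def
    by (intro integrable_mult_bounded) (auto intro: borel_measurable_continuous_onI[OF c])
  moreover have "(\<lambda>x. (indicator {a..b} x *\<^sub>R f x) * c x) = (\<lambda>x. f x * c x)"
    using outside by (auto simp: fun_eq_iff indicator_def)
  ultimately show ?thesis by simp
qed

lemma integral_indicator_approx:
  assumes "a < b"
  shows "(\<integral>x. indicator_approx a b n x \<partial>lborel) = (b - a) * (\<integral>x. indicator_approx 0 1 n x \<partial>lborel)"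
proof -
  have "(\<lambda>x. indicator_approx a b n (a + (b - a) * x)) = indicator_approx 0 1 n"
    using assms by (auto simp: fun_eq_iff indicator_approx_def)
  then show ?thesis
    using lborel_integral_real_affine[of "b - a" "indicator_approx a b n" a] assms by simp
qed

lemma integrable_indicator_approx:
  "a < b \<Longrightarrow> integrable lborel (indicator_approx a b n)"
  by (rule integrable_continuous_vanishing_outside[OF continuous_on_indicator_approx, where a=a and b=b])
    (auto intro: indicator_approx_eq_0)

lemma integral_mult_indicator_approx_LIMSEQ:
  fixes u :: "real \<Rightarrow> complex"
  assumes u: "set_integrable lborel {a..b} u" and "a < b"
  shows "(\<lambda>n. \<integral>x. u x * of_real (indicator_approx a b n x) \<partial>lborel) \<longlonglongrightarrow> (\<integral>x\<in>{a<..<b}. u x \<partial>lborel)"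
  unfolding set_lebesgue_integral_def
proof (rule integral_dominated_convergence[where w="\<lambda>x. indicator {a..b} x *\<^sub>R norm (u x)"])
  have [measurable]: "(\<lambda>x. indicator {a..b} x *\<^sub>R u x) \<in> borel_measurable lborel"
    using u by (simp add: set_integrable_def)
  show "integrable lborel (\<lambda>x. indicator {a..b} x *\<^sub>R norm (u x))"
    using set_integrable_norm[OF u] by (simp add: set_integrable_def)
  have "set_integrable lborel {a<..<b} u" by (rule set_integrable_subset[OF u]) auto
  then show "(\<lambda>x. indicat_real {a<..<b} x *\<^sub>R u x) \<in> borel_measurable lborel"
    unfolding set_integrable_def by (rule borel_measurable_integrable)
  have "continuous_on UNIV (\<lambda>x. complex_of_real (indicator_approx a b n x))" for n
    by (intro continuous_intros continuous_on_indicator_approx)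
  then have [measurable]: "(\<lambda>x. complex_of_real (indicator_approx a b n x)) \<in> borel_measurable lborel"
    for n by (simp add: borel_measurable_continuous_onI)
  have "(\<lambda>x. (indicator {a..b} x *\<^sub>R u x) * of_real (indicator_approx a b n x)) \<in> borel_measurable lborel"
    for n by measurable
  moreover have "(indicator {a..b} x *\<^sub>R u x) * of_real (indicator_approx a b n x)
      = u x * of_real (indicator_approx a b n x)" for x n
    using indicator_approx_eq_0[OF \<open>a < b\<close>, of x n] by (auto simp: indicator_def)
  ultimately show "(\<lambda>x. u x * of_real (indicator_approx a b n x)) \<in> borel_measurable lborel" for n
    by simp
  show "AE x in lborel. (\<lambda>n. u x * of_real (indicator_approx a b n x))
      \<longlonglongrightarrow> indicat_real {a<..<b} x *\<^sub>R u x"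
    using indicator_approx_LIMSEQ[OF \<open>a < b\<close>]
    by (intro AE_I2) (auto intro!: tendsto_eq_intros simp: scaleR_conv_of_real)
  show "AE x in lborel. norm (u x * of_real (indicator_approx a b n x))
      \<le> indicator {a..b} x *\<^sub>R norm (u x)" for n
  proof (intro AE_I2)
    fix x
    have "indicator_approx a b n x \<le> indicator {a..b} x"
      using indicator_approx_le_indicator[OF \<open>a < b\<close>, of n x] indicator_approx_bounds[of a b n x]
      by (auto simp: indicator_def)
    then show "norm (u x * of_real (indicator_approx a b n x)) \<le> indicator {a..b} x *\<^sub>R norm (u x)"
      using indicator_approx_bounds[of a b n x] by (simp add: norm_mult mult.commute mult_left_mono)
  qed
qed

lemma integral_mult_indicator_approx_diff_eq_0:
  fixes u :: "real \<Rightarrow> complex"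
  assumes weak: "\<And>\<phi>. test_fun \<phi> \<Longrightarrow> (\<integral>x. u x * of_real (deriv \<phi> x) \<partial>lborel) = 0"
    and "a < b"
  shows "(\<integral>x. u x * of_real (indicator_approx a b n x * (1 / (b - a)) - indicator_approx 0 1 n x)
      \<partial>lborel) = 0"
proof -
  define \<psi> where "\<psi> x = indicator_approx a b n x * (1 / (b - a)) - indicator_approx 0 1 n x" for x
  have "smooth \<psi>"
    unfolding \<psi>_def[abs_def] by (intro smooth_diff smooth_mult smooth_const smooth_indicator_approx)
  moreover have "\<psi> x = 0" if "x \<notin> {min a 0<..<max b 1}" for x
  proof -
    have "x \<notin> {a<..<b}" "x \<notin> {0<..<1}" using that by auto
    then show ?thesis using \<open>a < b\<close> by (simp add: \<psi>_def indicator_approx_eq_0)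
  qed
  moreover have "(\<integral>x. \<psi> x \<partial>lborel) = 0"
  proof -
    have "(\<integral>x. \<psi> x \<partial>lborel) = (\<integral>x. indicator_approx a b n x \<partial>lborel) * (1 / (b - a))
        - (\<integral>x. indicator_approx 0 1 n x \<partial>lborel)"
      unfolding \<psi>_def using \<open>a < b\<close> integrable_indicator_approx[of a b n] integrable_indicator_approx[of 0 1 n]
      by (simp add: Bochner_Integration.integral_diff)
    then show ?thesis using \<open>a < b\<close> by (simp add: integral_indicator_approx[OF \<open>a < b\<close>])
  qed
  ultimately obtain \<Phi> where "test_fun \<Phi>" "deriv \<Phi> = \<psi>"
    by (rule test_fun_antiderivative)
  with weak show ?thesis unfolding \<psi>_def[abs_def] by metis
qed

(* u tested against indicator_approx a b n / (b - a) - indicator_approx 0 1 n gives zero, this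
   function having mean zero and hence a test function as antiderivative; let n tend to infinity. *)
lemma weak_derivative_zero_interval_mean:
  fixes u :: "real \<Rightarrow> complex"
  assumes loc: "\<And>a b. set_integrable lborel {a..b} u"
    and weak: "\<And>\<phi>. test_fun \<phi> \<Longrightarrow> (\<integral>x. u x * of_real (deriv \<phi> x) \<partial>lborel) = 0"
    and "a < b"
  shows "(\<integral>x\<in>{a<..<b}. u x \<partial>lborel) = of_real (b - a) * (\<integral>x\<in>{0<..<1}. u x \<partial>lborel)"
proof -
  define I where "I n c d = (\<integral>x. u x * of_real (indicator_approx c d n x) \<partial>lborel)" for n c d
  have int: "integrable lborel (\<lambda>x. u x * of_real (indicator_approx c d n x))" if "c < d" for c d n
    using that loc
    by (intro integrable_mult_continuous_vanishing_outside[where a=c and b=d])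
      (auto intro: continuous_on_of_real continuous_on_indicator_approx indicator_approx_eq_0)
  have "I n a b * of_real (1 / (b - a)) - I n 0 1
      = (\<integral>x. u x * of_real (indicator_approx a b n x * (1 / (b - a)) - indicator_approx 0 1 n x)
          \<partial>lborel)" for n
  proof -
    have "I n a b * of_real (1 / (b - a)) - I n 0 1
        = (\<integral>x. u x * of_real (indicator_approx a b n x) * of_real (1 / (b - a))
            - u x * of_real (indicator_approx 0 1 n x) \<partial>lborel)"
      unfolding I_def using int[OF \<open>a < b\<close>] int[of 0 1]
      by (simp add: Bochner_Integration.integral_diff)
    then show ?thesis by (simp add: right_diff_distrib mult.assoc)
  qed
  then have "(\<lambda>n. I n a b * of_real (1 / (b - a)) - I n 0 1) = (\<lambda>n. 0)"
    using integral_mult_indicator_approx_diff_eq_0[OF weak \<open>a < b\<close>] by simp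
  moreover have "(\<lambda>n. I n a b * of_real (1 / (b - a)) - I n 0 1) \<longlonglongrightarrow>
      (\<integral>x\<in>{a<..<b}. u x \<partial>lborel) * of_real (1 / (b - a)) - (\<integral>x\<in>{0<..<1}. u x \<partial>lborel)"
    unfolding I_def using \<open>a < b\<close> loc
    by (intro tendsto_intros integral_mult_indicator_approx_LIMSEQ) auto
  ultimately have "(\<integral>x\<in>{a<..<b}. u x \<partial>lborel) * of_real (1 / (b - a))
      - (\<integral>x\<in>{0<..<1}. u x \<partial>lborel) = 0"
    by (simp add: LIMSEQ_const_iff)
  then show ?thesis
    using \<open>a < b\<close> by (simp add: field_simps flip: of_real_diff)
qed

lemma set_integrable_const_Icc: "set_integrable lborel {a..b::real} (\<lambda>x. c :: complex)"
  unfolding set_integrable_def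
  by (intro integrable_scaleR_left integrable_real_indicator) (auto simp: emeasure_lborel_Icc_eq)

lemma weak_derivative_zero_imp_AE_const:
  fixes u :: "real \<Rightarrow> complex"
  assumes loc: "\<And>a b. set_integrable lborel {a..b} u"
    and weak: "\<And>\<phi>. test_fun \<phi> \<Longrightarrow> (\<integral>x. u x * of_real (deriv \<phi> x) \<partial>lborel) = 0"
  obtains c where "AE x in lborel. u x = c"
proof -
  define c where "c = (\<integral>x\<in>{0<..<1}. u x \<partial>lborel)"
  have "AE x in lborel. u x - c = 0"
  proof (rule AE_zero_if_set_integrals_Ioo_zero)
    show "set_integrable lborel {a..b} (\<lambda>x. u x - c)" for a b
      using loc[of a b] set_integrable_const_Icc[of a b c]
      by (simp add: set_integrable_def scaleR_diff_right)
    fix a b :: real assume "a < b"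
    have "set_integrable lborel {a<..<b} u"
      by (rule set_integrable_subset[OF loc[of a b]]) auto
    moreover have "set_integrable lborel {a<..<b} (\<lambda>x. c)"
      by (rule set_integrable_subset[OF set_integrable_const_Icc[of a b]]) auto
    ultimately have "(\<integral>x\<in>{a<..<b}. u x - c \<partial>lborel)
        = (\<integral>x\<in>{a<..<b}. u x \<partial>lborel) - (\<integral>x\<in>{a<..<b}. c \<partial>lborel)"
      by (rule set_integral_diff)
    also have "\<dots> = 0"
      using weak_derivative_zero_interval_mean[OF loc weak \<open>a < b\<close>] \<open>a < b\<close>
      by (simp add: c_def set_integral_const emeasure_lborel_Ioo scaleR_conv_of_real)
    finally show "(\<integral>x\<in>{a<..<b}. u x - c \<partial>lborel) = 0" .
  qed
  then show ?thesis using that by (simp add: eventually_mono)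
qed

section \<open>Primitives and integration by parts\<close>

lemma integrable_indicator_mult_tensor:
  fixes P Q :: "real \<Rightarrow> complex"
  assumes P: "integrable lborel P" and Q: "integrable lborel Q"
    and [measurable]: "S \<in> sets (lborel \<Otimes>\<^sub>M lborel)"
  shows "integrable (lborel \<Otimes>\<^sub>M lborel) (\<lambda>z. indicator S z *\<^sub>R (P (fst z) * Q (snd z)))"
proof (rule integrableI_bounded)
  have [measurable]: "P \<in> borel_measurable lborel" "Q \<in> borel_measurable lborel"
    using P Q by auto
  show "(\<lambda>z. indicator S z *\<^sub>R (P (fst z) * Q (snd z))) \<in> borel_measurable (lborel \<Otimes>\<^sub>M lborel)"
    by measurable
  have "(\<integral>\<^sup>+ z. ennreal (norm (indicator S z *\<^sub>R (P (fst z) * Q (snd z)))) \<partial>(lborel \<Otimes>\<^sub>M lborel))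
      \<le> (\<integral>\<^sup>+ z. ennreal (norm (P (fst z))) * ennreal (norm (Q (snd z))) \<partial>(lborel \<Otimes>\<^sub>M lborel))"
    by (intro nn_integral_mono) (auto simp: indicator_def norm_mult ennreal_mult)
  also have "\<dots> = (\<integral>\<^sup>+ x. \<integral>\<^sup>+ t. ennreal (norm (P x)) * ennreal (norm (Q t)) \<partial>lborel \<partial>lborel)"
    by (subst lborel.nn_integral_fst[symmetric]) auto
  also have "\<dots> = (\<integral>\<^sup>+ x. ennreal (norm (P x)) \<partial>lborel) * (\<integral>\<^sup>+ t. ennreal (norm (Q t)) \<partial>lborel)"
    by (simp add: nn_integral_cmult nn_integral_multc)
  also have "\<dots> < \<infinity>"
    using P Q by (auto simp: integrable_iff_bounded ennreal_mult_less_top)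
  finally show "(\<integral>\<^sup>+ z. ennreal (norm (indicator S z *\<^sub>R (P (fst z) * Q (snd z))))
      \<partial>(lborel \<Otimes>\<^sub>M lborel)) < \<infinity>" .
qed

lemma Fubini_below_diagonal:
  fixes P Q :: "real \<Rightarrow> complex"
  assumes P: "integrable lborel P" and Q: "integrable lborel Q"
  shows "(\<integral>t. (\<integral>x. indicator {..<t} x *\<^sub>R P x \<partial>lborel) * Q t \<partial>lborel)
       = (\<integral>x. P x * (\<integral>t. indicator {x<..} t *\<^sub>R Q t \<partial>lborel) \<partial>lborel)"
proof -
  define S where "S = {z::real \<times> real. fst z < snd z}"
  have "Measurable.pred (lborel \<Otimes>\<^sub>M lborel) (\<lambda>z::real \<times> real. fst z < snd z)"
    by measurable
  then have S: "S \<in> sets (lborel \<Otimes>\<^sub>M lborel)"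
    unfolding S_def pred_def by (simp add: space_pair_measure)
  define f where "f x t = indicator S (x, t) *\<^sub>R (P x * Q t)" for x t
  have "integrable (lborel \<Otimes>\<^sub>M lborel) (case_prod f)"
    using integrable_indicator_mult_tensor[OF P Q S] by (simp add: f_def split_beta')
  then have "(\<integral>t. (\<integral>x. f x t \<partial>lborel) \<partial>lborel) = (\<integral>x. (\<integral>t. f x t \<partial>lborel) \<partial>lborel)"
    by (rule lborel_pair.Fubini_integral)
  moreover have "(\<integral>x. f x t \<partial>lborel) = (\<integral>x. indicator {..<t} x *\<^sub>R P x \<partial>lborel) * Q t" for t
  proof -
    have "(\<lambda>x. f x t) = (\<lambda>x. (indicator {..<t} x *\<^sub>R P x) * Q t)"
      by (auto simp: f_def S_def fun_eq_iff indicator_def)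
    then show ?thesis by (simp only: integral_mult_left_zero)
  qed
  moreover have "(\<integral>t. f x t \<partial>lborel) = P x * (\<integral>t. indicator {x<..} t *\<^sub>R Q t \<partial>lborel)" for x
  proof -
    have "(\<lambda>t. f x t) = (\<lambda>t. P x * (indicator {x<..} t *\<^sub>R Q t))"
      by (auto simp: f_def S_def fun_eq_iff indicator_def)
    then show ?thesis by (simp only: integral_mult_right_zero)
  qed
  ultimately show ?thesis by simp
qed

lemma borel_measurable_integral_indicator_family:
  fixes f :: "real \<Rightarrow> complex"
  assumes [measurable]: "f \<in> borel_measurable lborel"
    and [measurable]: "Measurable.pred (lborel \<Otimes>\<^sub>M lborel) (\<lambda>z. snd z \<in> S (fst z))"
  shows "(\<lambda>x. \<integral>t. indicator (S x) t *\<^sub>R f t \<partial>lborel) \<in> borel_measurable lborel"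
proof -
  have "(\<lambda>z. if snd z \<in> S (fst z) then f (snd z) else 0) \<in> borel_measurable (lborel \<Otimes>\<^sub>M lborel)"
    by measurable
  moreover have "(\<lambda>z. if snd z \<in> S (fst z) then f (snd z) else 0)
      = (\<lambda>(x, t). indicator (S x) t *\<^sub>R f t)"
    by (auto simp: fun_eq_iff indicator_def)
  ultimately show ?thesis
    by (intro lborel.borel_measurable_lebesgue_integral) simp
qed

lemma norm_integral_indicator_le:
  fixes Q :: "real \<Rightarrow> complex"
  assumes "integrable lborel Q" "S \<in> sets lborel"
  shows "norm (\<integral>t. indicator S t *\<^sub>R Q t \<partial>lborel) \<le> (\<integral>t. norm (Q t) \<partial>lborel)"
proof -
  have "norm (\<integral>t. indicator S t *\<^sub>R Q t \<partial>lborel) \<le> (\<integral>t. norm (indicator S t *\<^sub>R Q t) \<partial>lborel)"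
    by (rule integral_norm_bound)
  also have "\<dots> \<le> (\<integral>t. norm (Q t) \<partial>lborel)"
    using assms by (intro integral_mono integrable_norm integrable_mult_indicator)
      (auto simp: indicator_def)
  finally show ?thesis .
qed

lemma integrable_mult_integral_indicator:
  fixes P Q :: "real \<Rightarrow> complex"
  assumes P: "integrable lborel P" and Q: "integrable lborel Q" and S: "\<And>x. S x \<in> sets lborel"
    and [measurable]: "Measurable.pred (lborel \<Otimes>\<^sub>M lborel) (\<lambda>z. snd z \<in> S (fst z))"
  shows "integrable lborel (\<lambda>x. P x * (\<integral>t. indicator (S x) t *\<^sub>R Q t \<partial>lborel))"
proof (rule integrable_mult_bounded[OF P])
  show "norm (\<integral>t. indicator (S x) t *\<^sub>R Q t \<partial>lborel) \<le> (\<integral>t. norm (Q t) \<partial>lborel)" for x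
    by (rule norm_integral_indicator_le[OF Q S])
qed (use Q in \<open>auto intro: borel_measurable_integral_indicator_family\<close>)

(* Split the square into the parts above and below the diagonal and apply Fubini to the latter. *)
lemma integral_product_rule:
  fixes P Q :: "real \<Rightarrow> complex"
  assumes P: "integrable lborel P" and Q: "integrable lborel Q"
  defines "A x \<equiv> \<integral>t. indicator {..x} t *\<^sub>R Q t \<partial>lborel"
    and "B x \<equiv> \<integral>t. indicator {..<x} t *\<^sub>R P t \<partial>lborel"
  shows "integrable lborel (\<lambda>x. P x * A x + B x * Q x)"
    and "(\<integral>x. P x * A x + B x * Q x \<partial>lborel) = (\<integral>x. P x \<partial>lborel) * (\<integral>x. Q x \<partial>lborel)"
proof -
  define C where "C x = (\<integral>t. indicator {x<..} t *\<^sub>R Q t \<partial>lborel)" for x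
  have PA: "integrable lborel (\<lambda>x. P x * A x)"
    unfolding A_def by (rule integrable_mult_integral_indicator[OF P Q]) (simp_all, measurable)
  have PC: "integrable lborel (\<lambda>x. P x * C x)"
    unfolding C_def by (rule integrable_mult_integral_indicator[OF P Q]) (simp_all, measurable)
  have "integrable lborel (\<lambda>x. Q x * B x)"
    unfolding B_def by (rule integrable_mult_integral_indicator[OF Q P]) (simp_all, measurable)
  then have BQ: "integrable lborel (\<lambda>x. B x * Q x)" by (simp add: mult.commute)
  then show "integrable lborel (\<lambda>x. P x * A x + B x * Q x)" using PA by simp
  have AC: "A x + C x = (\<integral>t. Q t \<partial>lborel)" for x
  proof -
    have "A x + C x = (\<integral>t. indicator {..x} t *\<^sub>R Q t + indicator {x<..} t *\<^sub>R Q t \<partial>lborel)"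
      unfolding A_def C_def using Q
      by (intro Bochner_Integration.integral_add[symmetric] integrable_mult_indicator) auto
    also have "\<dots> = (\<integral>t. Q t \<partial>lborel)"
      by (intro Bochner_Integration.integral_cong) (auto simp: indicator_def)
    finally show ?thesis .
  qed
  have "(\<integral>x. P x * A x + B x * Q x \<partial>lborel) = (\<integral>x. P x * A x \<partial>lborel) + (\<integral>x. P x * C x \<partial>lborel)"
    using PA BQ Fubini_below_diagonal[OF P Q] by (simp add: B_def C_def)
  also have "\<dots> = (\<integral>x. P x * (\<integral>t. Q t \<partial>lborel) \<partial>lborel)"
    using PA PC by (simp add: AC distrib_left[symmetric] flip: Bochner_Integration.integral_add)
  finally show "(\<integral>x. P x * A x + B x * Q x \<partial>lborel) = (\<integral>x. P x \<partial>lborel) * (\<integral>x. Q x \<partial>lborel)"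
    by simp
qed

lemma set_integral_product_rule:
  fixes p q :: "real \<Rightarrow> complex"
  assumes p: "set_integrable lborel {a..b} p" and q: "set_integrable lborel {a..b} q"
  defines "I x \<equiv> p x * (\<integral>t\<in>{a..x}. q t \<partial>lborel) + (\<integral>t\<in>{a..x}. p t \<partial>lborel) * q x"
  shows "set_integrable lborel {a..b} I"
    and "(\<integral>x\<in>{a..b}. I x \<partial>lborel) = (\<integral>t\<in>{a..b}. p t \<partial>lborel) * (\<integral>t\<in>{a..b}. q t \<partial>lborel)"
proof -
  define P where "P x = indicator {a..b} x *\<^sub>R p x" for x
  define Q where "Q x = indicator {a..b} x *\<^sub>R q x" for x
  have PI: "integrable lborel P" using p unfolding P_def[abs_def] set_integrable_def .
  have QI: "integrable lborel Q" using q unfolding Q_def[abs_def] set_integrable_def .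
  have [measurable]: "P \<in> borel_measurable lborel" "Q \<in> borel_measurable lborel"
    using PI QI by auto
  have "indicator {a..b} x *\<^sub>R I x
      = P x * (\<integral>t. indicator {..x} t *\<^sub>R Q t \<partial>lborel) + (\<integral>t. indicator {..<x} t *\<^sub>R P t \<partial>lborel) * Q x"
    for x
  proof (cases "x \<in> {a..b}")
    case True
    have "(\<integral>t\<in>{a..x}. q t \<partial>lborel) = (\<integral>t. indicator {..x} t *\<^sub>R Q t \<partial>lborel)"
      unfolding set_lebesgue_integral_def Q_def
      using True by (intro Bochner_Integration.integral_cong) (auto simp: indicator_def)
    moreover have "(\<integral>t\<in>{a..x}. p t \<partial>lborel) = (\<integral>t. indicator {..<x} t *\<^sub>R P t \<partial>lborel)"
    proof -
      have "(\<integral>t\<in>{a..x}. p t \<partial>lborel) = (\<integral>t. indicator {..x} t *\<^sub>R P t \<partial>lborel)"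
        unfolding set_lebesgue_integral_def P_def
        using True by (intro Bochner_Integration.integral_cong) (auto simp: indicator_def)
      also have "\<dots> = (\<integral>t. indicator {..<x} t *\<^sub>R P t \<partial>lborel)"
        using AE_lborel_singleton[of x]
        by (intro integral_cong_AE) (auto elim!: eventually_mono simp: indicator_def)
      finally show ?thesis .
    qed
    ultimately show ?thesis using True by (simp add: I_def P_def Q_def)
  qed (simp add: P_def Q_def)
  then have eq: "(\<lambda>x. indicator {a..b} x *\<^sub>R I x)
      = (\<lambda>x. P x * (\<integral>t. indicator {..x} t *\<^sub>R Q t \<partial>lborel) + (\<integral>t. indicator {..<x} t *\<^sub>R P t \<partial>lborel) * Q x)"
    by (rule ext)
  show "set_integrable lborel {a..b} I"
    unfolding set_integrable_def eq by (rule integral_product_rule(1)[OF PI QI])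
  show "(\<integral>x\<in>{a..b}. I x \<partial>lborel) = (\<integral>t\<in>{a..b}. p t \<partial>lborel) * (\<integral>t\<in>{a..b}. q t \<partial>lborel)"
    unfolding set_lebesgue_integral_def eq integral_product_rule(2)[OF PI QI]
    by (simp only: P_def[abs_def] Q_def[abs_def])
qed

(* K is absolutely continuous with density g. *)
definition is_primitive :: "(real \<Rightarrow> complex) \<Rightarrow> (real \<Rightarrow> complex) \<Rightarrow> bool" where
  "is_primitive K g \<longleftrightarrow> (\<forall>a b. set_integrable lborel {a..b} g) \<and>
     (\<forall>x y. x \<le> y \<longrightarrow> K y - K x = (\<integral>t\<in>{x..y}. g t \<partial>lborel))"

lemma is_primitiveD:
  assumes "is_primitive K g"
  shows "set_integrable lborel {a..b} g"
    and "x \<le> y \<Longrightarrow> K y - K x = (\<integral>t\<in>{x..y}. g t \<partial>lborel)"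
  using assms by (auto simp: is_primitive_def)

lemma set_integral_by_parts:
  fixes K g F f :: "real \<Rightarrow> complex"
  assumes K: "is_primitive K g" and F: "is_primitive F f" and "a \<le> b"
  shows "set_integrable lborel {a..b} (\<lambda>x. g x * F x + K x * f x)"
    and "(\<integral>x\<in>{a..b}. g x * F x + K x * f x \<partial>lborel) = K b * F b - K a * F a"
proof -
  note g = is_primitiveD(1)[OF K, of a b] and f = is_primitiveD(1)[OF F, of a b]
  define I where "I x = g x * (\<integral>t\<in>{a..x}. f t \<partial>lborel) + (\<integral>t\<in>{a..x}. g t \<partial>lborel) * f x" for x
  have I: "set_integrable lborel {a..b} I"
    "(\<integral>x\<in>{a..b}. I x \<partial>lborel) = (\<integral>t\<in>{a..b}. g t \<partial>lborel) * (\<integral>t\<in>{a..b}. f t \<partial>lborel)"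
    unfolding I_def by (rule set_integral_product_rule[OF g f])+
  have gf: "set_integrable lborel {a..b} (\<lambda>x. F a * g x + K a * f x)"
    using g f by (intro set_integral_add set_integrable_mult_right) auto
  have eq: "g x * F x + K x * f x = I x + (F a * g x + K a * f x)" if "x \<in> {a..b}" for x
    using that is_primitiveD(2)[OF K, of a x] is_primitiveD(2)[OF F, of a x]
    by (simp add: I_def algebra_simps)
  show "set_integrable lborel {a..b} (\<lambda>x. g x * F x + K x * f x)"
    using set_integral_add[OF I(1) gf] by (subst set_integrable_cong[OF refl refl eq]) auto
  have "(\<integral>x\<in>{a..b}. g x * F x + K x * f x \<partial>lborel)
      = (\<integral>x\<in>{a..b}. I x + (F a * g x + K a * f x) \<partial>lborel)"
    by (rule set_lebesgue_integral_cong) (use eq in auto)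
  also have "\<dots> = (\<integral>x\<in>{a..b}. I x \<partial>lborel)
      + (F a * (\<integral>x\<in>{a..b}. g x \<partial>lborel) + K a * (\<integral>x\<in>{a..b}. f x \<partial>lborel))"
    using I(1) gf g f by (simp add: set_integral_add)
  also have "\<dots> = K b * F b - K a * F a"
    using I(2) is_primitiveD(2)[OF K \<open>a \<le> b\<close>] is_primitiveD(2)[OF F \<open>a \<le> b\<close>]
    by (simp add: algebra_simps flip: diff_conv_add_uminus)
  finally show "(\<integral>x\<in>{a..b}. g x * F x + K x * f x \<partial>lborel) = K b * F b - K a * F a" .
qed

lemma is_primitive_if_has_vector_derivative:
  fixes F f :: "real \<Rightarrow> complex"
  assumes F: "\<And>x. (F has_vector_derivative f x) (at x)" and f: "continuous_on UNIV f"
  shows "is_primitive F f"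
  unfolding is_primitive_def
proof safe
  show "set_integrable lborel {a..b} f" for a b
    unfolding set_integrable_def
    by (rule borel_integrable_compact) (auto intro: continuous_on_subset[OF f])
  show "F y - F x = (\<integral>t\<in>{x..y}. f t \<partial>lborel)" if "x \<le> y" for x y
    unfolding set_lebesgue_integral_def
    by (rule integral_FTC_atLeastAtMost[OF that, symmetric])
      (auto intro: has_vector_derivative_at_within[OF F] continuous_on_subset[OF f])
qed

lemma is_primitive_square:
  assumes "is_primitive K g"
  shows "is_primitive (\<lambda>x. (K x)\<^sup>2) (\<lambda>x. 2 * g x * K x)"
proof -
  have eq: "g x * K x + K x * g x = 2 * g x * K x" for x by simp
  note by_parts = set_integral_by_parts[OF assms assms, unfolded eq]
  show ?thesis
    unfolding is_primitive_def
  proof safe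
    show "set_integrable lborel {a..b} (\<lambda>x. 2 * g x * K x)" for a b
      using by_parts(1)[of a b] by (cases "a \<le> b") (auto simp: set_integrable_def)
    show "(K y)\<^sup>2 - (K x)\<^sup>2 = (\<integral>t\<in>{x..y}. 2 * g t * K t \<partial>lborel)" if "x \<le> y" for x y
      using by_parts(2)[OF that] by (simp add: power2_eq_square)
  qed
qed

lemma set_integral_Icc_split:
  fixes g :: "real \<Rightarrow> complex"
  assumes g: "set_integrable lborel {c..e} g" and "c \<le> d" "d \<le> e"
  shows "(\<integral>t\<in>{c..e}. g t \<partial>lborel) = (\<integral>t\<in>{c..d}. g t \<partial>lborel) + (\<integral>t\<in>{d..e}. g t \<partial>lborel)"
proof -
  have cd: "set_integrable lborel {c..d} g" and de: "set_integrable lborel {d..e} g"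
    using assms by (auto intro: set_integrable_subset[OF g])
  have "(\<integral>t\<in>{c..d}. g t \<partial>lborel) + (\<integral>t\<in>{d..e}. g t \<partial>lborel)
      = (\<integral>t. indicator {c..d} t *\<^sub>R g t + indicator {d..e} t *\<^sub>R g t \<partial>lborel)"
    using cd de unfolding set_lebesgue_integral_def set_integrable_def
    by (rule Bochner_Integration.integral_add[symmetric])
  also have "\<dots> = (\<integral>t\<in>{c..e}. g t \<partial>lborel)"
    unfolding set_lebesgue_integral_def
  proof (rule integral_cong_AE)
    show "AE t in lborel. indicator {c..d} t *\<^sub>R g t + indicator {d..e} t *\<^sub>R g t
        = indicator {c..e} t *\<^sub>R g t"
      using AE_lborel_singleton[of d]
      by eventually_elim (use assms in \<open>auto simp: indicator_def\<close>)
  qed (use g cd de in \<open>auto simp: set_integrable_def\<close>)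
  finally show ?thesis ..
qed

definition primitive :: "(real \<Rightarrow> complex) \<Rightarrow> real \<Rightarrow> complex" where
  "primitive g x = (if 0 \<le> x then (\<integral>t\<in>{0..x}. g t \<partial>lborel) else - (\<integral>t\<in>{x..0}. g t \<partial>lborel))"

lemma is_primitive_primitive:
  assumes g: "\<And>a b. set_integrable lborel {a..b} g"
  shows "is_primitive (primitive g) g"
  unfolding is_primitive_def
proof safe
  fix x y :: real assume "x \<le> y"
  consider "0 \<le> x" | "x < 0" "0 \<le> y" | "y < 0" by linarith
  then show "primitive g y - primitive g x = (\<integral>t\<in>{x..y}. g t \<partial>lborel)"
  proof cases
    case 1
    with set_integral_Icc_split[OF g, of 0 x y] \<open>x \<le> y\<close> show ?thesis by (simp add: primitive_def)
  next
    case 2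
    with set_integral_Icc_split[OF g, of x 0 y] show ?thesis by (simp add: primitive_def)
  next
    case 3
    with set_integral_Icc_split[OF g, of x y 0] \<open>x \<le> y\<close> show ?thesis by (simp add: primitive_def)
  qed
qed (rule g)

lemma borel_measurable_primitive:
  assumes [measurable]: "g \<in> borel_measurable lborel"
  shows "primitive g \<in> borel_measurable lborel"
proof -
  have [measurable]: "(\<lambda>x. \<integral>t\<in>{0..x}. g t \<partial>lborel) \<in> borel_measurable lborel"
    "(\<lambda>x. \<integral>t\<in>{x..0}. g t \<partial>lborel) \<in> borel_measurable lborel"
    unfolding set_lebesgue_integral_def
    by (intro borel_measurable_integral_indicator_family; simp; measurable)+
  show ?thesis unfolding primitive_def[abs_def] by measurable
qed

lemma set_integrable_if_is_primitive:
  fixes K g :: "real \<Rightarrow> complex"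
  assumes K: "is_primitive K g" and [measurable]: "K \<in> borel_measurable lborel"
  shows "set_integrable lborel {a..b} K"
proof -
  define C where "C = norm (K a) + (\<integral>t\<in>{a..b}. norm (g t) \<partial>lborel)"
  have K_bound: "norm (K x) \<le> C" if x: "x \<in> {a..b}" for x
  proof -
    have "K x = K a + (\<integral>t\<in>{a..x}. g t \<partial>lborel)"
      using is_primitiveD(2)[OF K, of a x] x by (simp add: algebra_simps)
    then have "norm (K x) \<le> norm (K a) + norm (\<integral>t\<in>{a..x}. g t \<partial>lborel)"
      by (metis norm_triangle_ineq)
    also have "norm (\<integral>t\<in>{a..x}. g t \<partial>lborel) \<le> (\<integral>t\<in>{a..x}. norm (g t) \<partial>lborel)"
      using is_primitiveD(1)[OF K] by (rule set_integral_norm_bound)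
    also have "\<dots> \<le> (\<integral>t\<in>{a..b}. norm (g t) \<partial>lborel)"
      unfolding set_lebesgue_integral_def
      using x set_integrable_norm[OF is_primitiveD(1)[OF K]]
      by (intro integral_mono) (auto simp: indicator_def set_integrable_def)
    finally show ?thesis by (simp add: C_def)
  qed
  have bound: "norm (indicator {a..b} x *\<^sub>R K x) \<le> norm (C * indicator {a..b} x)" for x
  proof (cases "x \<in> {a..b}")
    case True
    then show ?thesis using K_bound[OF True] by (auto intro: order_trans[OF _ abs_ge_self])
  qed simp
  have int: "integrable lborel (\<lambda>x. C * indicat_real {a..b} x)"
    by (intro integrable_mult_right integrable_real_indicator) (auto simp: emeasure_lborel_Icc_eq)
  show ?thesis
    unfolding set_integrable_def
    by (rule Bochner_Integration.integrable_bound[OF int _ AE_I2[OF bound]]) measurable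
qed

lemma is_primitive_weak_derivative:
  fixes K g :: "real \<Rightarrow> complex"
  assumes K: "is_primitive K g" and \<phi>: "test_fun \<phi>"
  shows "integrable lborel (\<lambda>x. K x * of_real (deriv \<phi> x))"
    and "(\<integral>x. K x * of_real (deriv \<phi> x) \<partial>lborel) = - (\<integral>x. g x * of_real (\<phi> x) \<partial>lborel)"
proof -
  obtain a b where "a < b" and R: "\<And>x. x \<notin> {a<..<b} \<Longrightarrow> \<phi> x = 0 \<and> deriv \<phi> x = 0"
    using test_fun_vanishes_outside[OF \<phi>] by blast
  have outside: "\<phi> x = 0" "deriv \<phi> x = 0" if "x \<notin> {a..b}" for x
    using R[of x] that by auto
  have boundary: "\<phi> a = 0" "\<phi> b = 0" using R[of a] R[of b] by auto
  have cont: "continuous_on UNIV (\<lambda>x. complex_of_real (\<phi> x))"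
    by (intro continuous_on_of_real test_fun_continuous[OF \<phi>])
  have "is_primitive (\<lambda>x. of_real (\<phi> x)) (\<lambda>x. of_real (deriv \<phi> x))"
    using test_fun_has_real_derivative[OF \<phi>] test_fun_deriv_continuous[OF \<phi>]
    by (intro is_primitive_if_has_vector_derivative has_vector_derivative_of_real continuous_on_of_real)
      auto
  note by_parts = set_integral_by_parts[OF K this, of a b]
  let ?G = "\<lambda>x. g x * of_real (\<phi> x) + K x * of_real (deriv \<phi> x)"
  have G: "(\<lambda>x. indicator {a..b} x *\<^sub>R ?G x) = ?G"
    using outside by (auto simp: fun_eq_iff indicator_def)
  from \<open>a < b\<close> have G_int: "integrable lborel ?G" and G_0: "(\<integral>x. ?G x \<partial>lborel) = 0"
    using by_parts boundary unfolding set_integrable_def set_lebesgue_integral_def G by auto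
  have g_int: "integrable lborel (\<lambda>x. g x * of_real (\<phi> x))"
    using outside by (intro integrable_mult_continuous_vanishing_outside[OF is_primitiveD(1)[OF K] cont])
      auto
  have eq: "(\<lambda>x. K x * of_real (deriv \<phi> x)) = (\<lambda>x. ?G x - g x * of_real (\<phi> x))" by auto
  show "integrable lborel (\<lambda>x. K x * of_real (deriv \<phi> x))"
    unfolding eq using G_int g_int by (rule Bochner_Integration.integrable_diff)
  show "(\<integral>x. K x * of_real (deriv \<phi> x) \<partial>lborel) = - (\<integral>x. g x * of_real (\<phi> x) \<partial>lborel)"
  proof -
    have "(\<integral>x. K x * of_real (deriv \<phi> x) \<partial>lborel)
        = (\<integral>x. ?G x \<partial>lborel) - (\<integral>x. g x * of_real (\<phi> x) \<partial>lborel)"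
      unfolding eq by (rule Bochner_Integration.integral_diff[OF G_int g_int])
    then show ?thesis using G_0 by simp
  qed
qed

section \<open>Absolutely continuous representatives of Sobolev functions\<close>

lemma square_integrable_imp_set_integrable:
  assumes "square_integrable f"
  shows "set_integrable lborel {a..b} f"
proof -
  have [measurable]: "f \<in> borel_measurable lborel" and f: "integrable lborel (\<lambda>x. (cmod (f x))\<^sup>2)"
    using assms by (auto simp: square_integrable_def)
  have int: "integrable lborel (\<lambda>x. indicat_real {a..b} x + (cmod (f x))\<^sup>2)"
    by (intro Bochner_Integration.integrable_add f integrable_real_indicator)
      (auto simp: emeasure_lborel_Icc_eq)
  have bound: "norm (indicat_real {a..b} x *\<^sub>R f x) \<le> norm (indicat_real {a..b} x + (cmod (f x))\<^sup>2)"
    for x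
  proof -
    have "0 \<le> (cmod (f x) - 1)\<^sup>2" by simp
    then have "2 * cmod (f x) \<le> 1 + cmod (f x) * cmod (f x)"
      by (simp add: power2_eq_square algebra_simps)
    then have "cmod (f x) \<le> 1 + (cmod (f x))\<^sup>2"
      using norm_ge_zero[of "f x"] unfolding power2_eq_square by linarith
    then show ?thesis by (auto simp: indicator_def)
  qed
  show ?thesis
    unfolding set_integrable_def
    by (rule Bochner_Integration.integrable_bound[OF int _ AE_I2[OF bound]]) measurable
qed

lemma H1_weak_AE_eq_primitive:
  assumes "H1_weak h g"
  obtains K where "AE x in lborel. h x = K x" "K \<in> borel_measurable lborel" "is_primitive K g"
proof -
  have [measurable]: "h \<in> borel_measurable lborel" "g \<in> borel_measurable lborel"
    using assms by (auto simp: H1_weak_def square_integrable_def)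
  have h: "\<And>a b. set_integrable lborel {a..b} h" and g: "\<And>a b. set_integrable lborel {a..b} g"
    using assms square_integrable_imp_set_integrable by (auto simp: H1_weak_def)
  have P: "is_primitive (primitive g) g" by (rule is_primitive_primitive[OF g])
  have [measurable]: "primitive g \<in> borel_measurable lborel" by (rule borel_measurable_primitive) simp
  obtain c where c: "AE x in lborel. h x - primitive g x = c"
  proof (rule weak_derivative_zero_imp_AE_const)
    show "set_integrable lborel {a..b} (\<lambda>x. h x - primitive g x)" for a b
      using h[of a b] set_integrable_if_is_primitive[OF P, of a b] by (simp add: set_integral_diff)
    fix \<phi> assume \<phi>: "test_fun \<phi>"
    obtain a b where "\<And>x. x \<notin> {a<..<b} \<Longrightarrow> \<phi> x = 0 \<and> deriv \<phi> x = 0"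
      using test_fun_vanishes_outside[OF \<phi>] by blast
    then have "integrable lborel (\<lambda>x. h x * of_real (deriv \<phi> x))"
      by (intro integrable_mult_continuous_vanishing_outside[OF h, where a=a and b=b]
          continuous_on_of_real test_fun_deriv_continuous[OF \<phi>]) auto
    then show "(\<integral>x. (h x - primitive g x) * of_real (deriv \<phi> x) \<partial>lborel) = 0"
      using is_primitive_weak_derivative[OF P \<phi>] assms \<phi>
      by (simp add: left_diff_distrib H1_weak_def)
  qed
  show ?thesis
  proof
    show "AE x in lborel. h x = primitive g x + c"
      using c by eventually_elim (metis diff_add_cancel add.commute)
    show "(\<lambda>x. primitive g x + c) \<in> borel_measurable lborel" by measurable
    show "is_primitive (\<lambda>x. primitive g x + c) g" using P by (simp add: is_primitive_def)
  qed
qed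

section \<open>Vanishing of the boundary terms\<close>

lemma integrable_mult_square_integrable:
  fixes f k :: "real \<Rightarrow> complex"
  assumes [measurable]: "f \<in> borel_measurable lborel" "k \<in> borel_measurable lborel"
    and f: "integrable lborel (\<lambda>x. (cmod (f x))\<^sup>2)" and k: "integrable lborel (\<lambda>x. (cmod (k x))\<^sup>2)"
  shows "integrable lborel (\<lambda>x. f x * k x)"
proof (rule Bochner_Integration.integrable_bound[where f="\<lambda>x. (cmod (f x))\<^sup>2 + (cmod (k x))\<^sup>2"])
  show "integrable lborel (\<lambda>x. (cmod (f x))\<^sup>2 + (cmod (k x))\<^sup>2)" using f k by simp
  show "AE x in lborel. norm (f x * k x) \<le> norm ((cmod (f x))\<^sup>2 + (cmod (k x))\<^sup>2)"
  proof (intro AE_I2)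
    fix x
    have "0 \<le> (cmod (f x) - cmod (k x))\<^sup>2" by simp
    then have "2 * (cmod (f x) * cmod (k x)) \<le> (cmod (f x))\<^sup>2 + (cmod (k x))\<^sup>2"
      by (simp add: power2_eq_square algebra_simps)
    moreover have "0 \<le> cmod (f x) * cmod (k x)" by simp
    ultimately have "cmod (f x) * cmod (k x) \<le> (cmod (f x))\<^sup>2 + (cmod (k x))\<^sup>2" by linarith
    then show "norm (f x * k x) \<le> norm ((cmod (f x))\<^sup>2 + (cmod (k x))\<^sup>2)"
      by (simp add: norm_mult)
  qed
qed measurable

lemma integral_ge_on_interval:
  fixes f :: "real \<Rightarrow> real"
  assumes f: "integrable lborel f" "\<And>x. 0 \<le> f x"
    and "0 \<le> N" "0 \<le> c" "\<And>x. x \<in> {A..A+N} \<Longrightarrow> c \<le> f x"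
  shows "c * N \<le> (\<integral>x. f x \<partial>lborel)"
proof -
  have "(\<integral>x. c * indicator {A..A+N} x \<partial>lborel) \<le> (\<integral>x. f x \<partial>lborel)"
    using assms
    by (intro integral_mono integrable_mult_right integrable_real_indicator)
      (auto simp: emeasure_lborel_Icc_eq indicator_def)
  moreover have "(\<integral>x. c * indicator {A..A+N} x \<partial>lborel) = c * N"
    using \<open>0 \<le> N\<close> by (simp add: measure_lborel_Icc mult.commute)
  ultimately show ?thesis by linarith
qed

lemma square_integrable_tendsto_at_top_eq_0:
  fixes K :: "real \<Rightarrow> complex"
  assumes K: "integrable lborel (\<lambda>x. (cmod (K x))\<^sup>2)" and lim: "((\<lambda>x. (K x)\<^sup>2) \<longlongrightarrow> L) at_top"
  shows "L = 0"
proof (rule ccontr)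
  assume "L \<noteq> 0"
  define c where "c = cmod L / 2"
  define I where "I = (\<integral>x. (cmod (K x))\<^sup>2 \<partial>lborel)"
  have "c > 0" using \<open>L \<noteq> 0\<close> by (simp add: c_def)
  have "((\<lambda>x. cmod ((K x)\<^sup>2)) \<longlongrightarrow> cmod L) at_top" by (intro tendsto_norm lim)
  then have "eventually (\<lambda>x. c < cmod ((K x)\<^sup>2)) at_top"
    by (rule order_tendstoD) (use \<open>L \<noteq> 0\<close> in \<open>simp add: c_def\<close>)
  then obtain X where X: "\<And>x. X \<le> x \<Longrightarrow> c < (cmod (K x))\<^sup>2"
    by (auto simp: eventually_at_top_linorder norm_power)
  have "0 \<le> I" unfolding I_def by (rule integral_nonneg_AE) auto
  then have "c * (I / c + 1) \<le> I"
    unfolding I_def using X \<open>c > 0\<close>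
    by (intro integral_ge_on_interval[OF K, of _ _ X]) (auto intro: less_imp_le)
  moreover have "c * (I / c + 1) = I + c" using \<open>c > 0\<close> by (simp add: field_simps)
  ultimately show False using \<open>c > 0\<close> by linarith
qed

lemma square_integrable_tendsto_at_bot_eq_0:
  fixes K :: "real \<Rightarrow> complex"
  assumes K: "integrable lborel (\<lambda>x. (cmod (K x))\<^sup>2)" and lim: "((\<lambda>x. (K x)\<^sup>2) \<longlongrightarrow> L) at_bot"
  shows "L = 0"
proof (rule square_integrable_tendsto_at_top_eq_0)
  show "integrable lborel (\<lambda>x. (cmod (K (- x)))\<^sup>2)"
    using lborel_integrable_real_affine_iff[of "-1" "\<lambda>x. (cmod (K x))\<^sup>2" 0] K by simp
  show "((\<lambda>x. (K (- x))\<^sup>2) \<longlongrightarrow> L) at_top"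
    using lim by (simp add: filterlim_at_bot_mirror)
qed

lemma is_primitive_square_tendsto_0:
  fixes K g :: "real \<Rightarrow> complex"
  assumes K: "is_primitive K g" and gK: "integrable lborel (\<lambda>x. g x * K x)"
    and K2: "integrable lborel (\<lambda>x. (cmod (K x))\<^sup>2)"
  shows "((\<lambda>x. (K x)\<^sup>2) \<longlongrightarrow> 0) at_top" and "((\<lambda>x. (K x)\<^sup>2) \<longlongrightarrow> 0) at_bot"
proof -
  define p where "p x = 2 * g x * K x" for x
  have p: "set_integrable lborel A p" if "A \<in> sets lborel" for A
    using gK that unfolding p_def set_integrable_def
    by (intro integrable_mult_indicator) (auto simp: mult.assoc)
  have K2_primitive: "(K y)\<^sup>2 - (K x)\<^sup>2 = (\<integral>t\<in>{x..y}. p t \<partial>lborel)" if "x \<le> y" for x y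
    using is_primitiveD(2)[OF is_primitive_square[OF K] that] by (simp add: p_def)
  have "((\<lambda>x. (K 0)\<^sup>2 + (\<integral>t\<in>{0..x}. p t \<partial>lborel)) \<longlongrightarrow> (K 0)\<^sup>2 + (\<integral>t\<in>{0..}. p t \<partial>lborel)) at_top"
    by (intro tendsto_add tendsto_const tendsto_set_lebesgue_integral_at_top p) auto
  moreover have "\<forall>\<^sub>F x in at_top. (K 0)\<^sup>2 + (\<integral>t\<in>{0..x}. p t \<partial>lborel) = (K x)\<^sup>2"
    using eventually_ge_at_top[of "0::real"] by eventually_elim (simp add: K2_primitive[symmetric])
  ultimately have "((\<lambda>x. (K x)\<^sup>2) \<longlongrightarrow> (K 0)\<^sup>2 + (\<integral>t\<in>{0..}. p t \<partial>lborel)) at_top"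
    by (rule Lim_transform_eventually)
  with square_integrable_tendsto_at_top_eq_0[OF K2 this]
  show "((\<lambda>x. (K x)\<^sup>2) \<longlongrightarrow> 0) at_top" by simp
  have "((\<lambda>x. (K 0)\<^sup>2 - (\<integral>t\<in>{x..0}. p t \<partial>lborel)) \<longlongrightarrow> (K 0)\<^sup>2 - (\<integral>t\<in>{..0}. p t \<partial>lborel)) at_bot"
    by (intro tendsto_diff tendsto_const tendsto_set_lebesgue_integral_at_bot p) auto
  moreover have "\<forall>\<^sub>F x in at_bot. (K 0)\<^sup>2 - (\<integral>t\<in>{x..0}. p t \<partial>lborel) = (K x)\<^sup>2"
    using eventually_le_at_bot[of "0::real"] by eventually_elim (simp add: K2_primitive[symmetric])
  ultimately have "((\<lambda>x. (K x)\<^sup>2) \<longlongrightarrow> (K 0)\<^sup>2 - (\<integral>t\<in>{..0}. p t \<partial>lborel)) at_bot"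
    by (rule Lim_transform_eventually)
  with square_integrable_tendsto_at_bot_eq_0[OF K2 this]
  show "((\<lambda>x. (K x)\<^sup>2) \<longlongrightarrow> 0) at_bot" by simp
qed

lemma set_integral_Icc_symmetric_LIMSEQ:
  fixes G :: "real \<Rightarrow> complex"
  assumes G: "integrable lborel G"
  shows "(\<lambda>n. \<integral>x\<in>{- real n..real n}. G x \<partial>lborel) \<longlonglongrightarrow> (\<integral>x. G x \<partial>lborel)"
  unfolding set_lebesgue_integral_def
proof (rule integral_dominated_convergence[where w="\<lambda>x. norm (G x)"])
  show "AE x in lborel. (\<lambda>n. indicat_real {- real n..real n} x *\<^sub>R G x) \<longlonglongrightarrow> G x"
  proof (intro AE_I2 tendsto_eventually)
    fix x :: real
    obtain N :: nat where N: "\<bar>x\<bar> \<le> real N" using real_arch_simple by blast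
    have "\<forall>\<^sub>F n in sequentially. N \<le> n" by (rule eventually_ge_at_top)
    then show "\<forall>\<^sub>F n in sequentially. indicat_real {- real n..real n} x *\<^sub>R G x = G x"
      by eventually_elim (use N in \<open>auto simp: indicator_def\<close>)
  qed
qed (use G in \<open>auto simp: indicator_def\<close>)

lemma integral_derivative_square_mult_eq_0:
  fixes K g F f :: "real \<Rightarrow> complex"
  assumes K: "is_primitive K g" and [measurable]: "K \<in> borel_measurable lborel" "g \<in> borel_measurable lborel"
    and K2: "integrable lborel (\<lambda>x. (cmod (K x))\<^sup>2)" and g2: "integrable lborel (\<lambda>x. (cmod (g x))\<^sup>2)"
    and F: "is_primitive F f" and [measurable]: "F \<in> borel_measurable lborel" "f \<in> borel_measurable lborel"
    and F_bound: "\<And>x. norm (F x) \<le> B" and f_bound: "\<And>x. norm (f x) \<le> B"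
  shows "integrable lborel (\<lambda>x. 2 * g x * K x * F x + (K x)\<^sup>2 * f x)"
    and "(\<integral>x. 2 * g x * K x * F x + (K x)\<^sup>2 * f x \<partial>lborel) = 0"
proof -
  let ?G = "\<lambda>x. 2 * g x * K x * F x + (K x)\<^sup>2 * f x"
  have gK: "integrable lborel (\<lambda>x. g x * K x)" by (rule integrable_mult_square_integrable[OF _ _ g2 K2]) simp_all
  have "integrable lborel (\<lambda>x. K x * K x)" by (rule integrable_mult_square_integrable[OF _ _ K2 K2]) simp_all
  then have "integrable lborel (\<lambda>x. (K x)\<^sup>2 * f x)"
    by (intro integrable_mult_bounded[OF _ _ f_bound]) (simp_all add: power2_eq_square)
  moreover have "integrable lborel (\<lambda>x. (g x * K x) * (2 * F x))"
    using F_bound by (intro integrable_mult_bounded[OF gK, of _ "2 * B"]) (auto simp: norm_mult)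
  ultimately show G: "integrable lborel ?G" by (simp add: algebra_simps)
  have boundary: "((\<lambda>x. (K x)\<^sup>2 * F x) \<longlongrightarrow> 0) F'" if "((\<lambda>x. (K x)\<^sup>2) \<longlongrightarrow> 0) F'" for F'
    by (rule tendsto_0_le[OF that, of _ B]) (auto simp: norm_mult mult_left_mono F_bound)
  have "(\<lambda>n. (K (real n))\<^sup>2 * F (real n) - (K (- real n))\<^sup>2 * F (- real n)) \<longlonglongrightarrow> 0 - 0"
    using is_primitive_square_tendsto_0[OF K gK K2]
    by (intro tendsto_diff filterlim_compose[OF boundary filterlim_real_sequentially]
        filterlim_compose[OF boundary filterlim_uminus_at_top[THEN iffD1, OF filterlim_real_sequentially]])
  moreover have "(\<integral>x\<in>{- real n..real n}. ?G x \<partial>lborel)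
      = (K (real n))\<^sup>2 * F (real n) - (K (- real n))\<^sup>2 * F (- real n)" for n :: nat
    using set_integral_by_parts(2)[OF is_primitive_square[OF K] F, of "- real n" "real n"] by simp
  ultimately have "(\<lambda>n. \<integral>x\<in>{- real n..real n}. ?G x \<partial>lborel) \<longlonglongrightarrow> 0" by simp
  with set_integral_Icc_symmetric_LIMSEQ[OF G] show "(\<integral>x. ?G x \<partial>lborel) = 0"
    by (rule LIMSEQ_unique)
qed

section \<open>The Hessian of the squared modulus of a holomorphic function\<close>

lemma grad_norm_square_holomorphic:
  assumes hol: "f holomorphic_on UNIV" and W: "\<And>z. W z = (cmod (f z))\<^sup>2"
  shows "grad W z = 2 * f z * cnj (deriv f z)"
proof -
  define G where "G = 2 * f z * cnj (deriv f z)"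
  have df: "(f has_derivative (\<lambda>h. deriv f z * h)) (at z)"
    using holomorphic_derivI[OF hol open_UNIV UNIV_I] by (simp add: has_field_derivative_def)
  have "W = (\<lambda>z. f z \<bullet> f z)" by (auto simp: fun_eq_iff W power2_norm_eq_inner)
  then have "(W has_derivative (\<lambda>h. f z \<bullet> (deriv f z * h) + (deriv f z * h) \<bullet> f z)) (at z)"
    using has_derivative_inner[OF df df] by simp
  moreover have "(\<lambda>h. f z \<bullet> (deriv f z * h) + (deriv f z * h) \<bullet> f z) = (\<lambda>v. G \<bullet> v)"
    by (auto simp: fun_eq_iff inner_complex_def algebra_simps G_def)
  ultimately have D: "(W has_derivative (\<lambda>v. G \<bullet> v)) (at z)" by simp
  have "(THE g. (W has_derivative (\<lambda>v. g \<bullet> v)) (at z)) = G"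
  proof (rule the_equality)
    fix g assume "(W has_derivative (\<lambda>v. g \<bullet> v)) (at z)"
    then have e: "(\<lambda>v. g \<bullet> v) = (\<lambda>v. G \<bullet> v)" using has_derivative_unique D by blast
    from fun_cong[OF e, of 1] fun_cong[OF e, of \<i>] show "g = G"
      by (simp add: inner_complex_def complex_eq_iff)
  qed (fact D)
  then show ?thesis by (simp add: grad_def G_def)
qed

lemma hess_norm_square_holomorphic:
  assumes hol: "f holomorphic_on UNIV" and W: "\<And>z. W z = (cmod (f z))\<^sup>2"
  shows "hess W z v = 2 * (deriv f z * v * cnj (deriv f z) + f z * cnj (deriv (deriv f) z * v))"
proof -
  define L where "L = (\<lambda>v. 2 * (deriv f z * v * cnj (deriv f z) + f z * cnj (deriv (deriv f) z * v)))"
  have df: "(f has_derivative (\<lambda>h. deriv f z * h)) (at z)"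
    using holomorphic_derivI[OF hol open_UNIV UNIV_I] by (simp add: has_field_derivative_def)
  have "deriv f holomorphic_on UNIV" by (rule holomorphic_deriv[OF hol open_UNIV])
  then have "(deriv f has_derivative (\<lambda>h. deriv (deriv f) z * h)) (at z)"
    using holomorphic_derivI[OF _ open_UNIV UNIV_I] by (simp add: has_field_derivative_def)
  then have "((\<lambda>z. cnj (deriv f z)) has_derivative (\<lambda>h. cnj (deriv (deriv f) z * h))) (at z)"
    by (rule bounded_linear.has_derivative[OF bounded_linear_cnj])
  from has_derivative_mult[OF df this]
  have "((\<lambda>z. 2 * (f z * cnj (deriv f z))) has_derivative
      (\<lambda>h. 2 * (f z * cnj (deriv (deriv f) z * h) + deriv f z * h * cnj (deriv f z)))) (at z)"
    by (rule has_derivative_mult_right)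
  moreover have "(\<lambda>h. 2 * (f z * cnj (deriv (deriv f) z * h) + deriv f z * h * cnj (deriv f z))) = L"
    by (auto simp: L_def fun_eq_iff algebra_simps)
  ultimately have "((\<lambda>z. 2 * f z * cnj (deriv f z)) has_derivative L) (at z)"
    by (simp add: mult.assoc)
  moreover have "grad W = (\<lambda>z. 2 * f z * cnj (deriv f z))"
    using grad_norm_square_holomorphic[OF hol W] by auto
  ultimately have D: "(grad W has_derivative L) (at z)" by simp
  have "(THE L'. (grad W has_derivative L') (at z)) = L"
    using has_derivative_unique D by (intro the_equality) blast+
  then show ?thesis by (simp add: hess_def L_def)
qed

(* Fz, fz and f2 stand for f'(e), f(e) and f''(e);
   the last summand is sqrt 2 Re (conj m (h^2 f'(e))'). *)
lemma completed_square_identity: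
  fixes g h Fz fz f2 m :: complex
  assumes m: "cmod m = 1"
  shows "(cmod g)\<^sup>2 + h \<bullet> (2 * (Fz * h * cnj Fz + fz * cnj (f2 * h)))
    = (cmod (g - complex_of_real (sqrt 2) * m * cnj (Fz * h)))\<^sup>2
      + sqrt 2 * Re (cnj m * (2 * g * h * Fz + h\<^sup>2 * (f2 * (complex_of_real (sqrt 2) * m * cnj fz))))"
proof -
  define s where "s = complex_of_real (sqrt 2)"
  have mm: "m * cnj m = 1" using complex_norm_square[of m] m by simp
  have ss: "s * s = 2" by (simp add: s_def flip: of_real_mult)
  have cs: "cnj s = s" by (simp add: s_def)
  have norm_square: "(cmod z)\<^sup>2 = Re (z * cnj z)" for z
    by (metis Re_complex_of_real complex_norm_square)
  have sqrt_2: "sqrt 2 * Re z = Re (s * z)" for z by (simp add: s_def)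
  define A where "A = g * cnj g + cnj h * (2 * (Fz * h * cnj Fz + fz * cnj (f2 * h)))"
  define B where "B = (g - s * m * cnj (Fz * h)) * cnj (g - s * m * cnj (Fz * h))"
  define C where "C = s * (cnj m * (2 * g * h * Fz + h\<^sup>2 * (f2 * (s * m * cnj fz))))"
  have "A - B - C + cnj (A - B - C) = 0"
    unfolding A_def B_def C_def using mm ss cs
    by (simp add: algebra_simps power2_eq_square) algebra
  then have "Re A = Re B + Re C" by (simp add: complex_eq_iff)
  then show ?thesis
    unfolding A_def B_def C_def norm_square inner_complex_def sqrt_2 s_def by simp
qed

section \<open>The quadratic form along the orbit\<close>

lemma bounded_if_tendsto_at_bot_at_top:
  fixes e :: "real \<Rightarrow> 'a::real_normed_vector"
  assumes e: "continuous_on UNIV e" and "(e \<longlongrightarrow> a) at_bot" "(e \<longlongrightarrow> b) at_top"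
  obtains R where "\<And>x. norm (e x) \<le> R"
proof -
  obtain X1 where X1: "\<And>x. X1 \<le> x \<Longrightarrow> dist (e x) b < 1"
    using tendstoD[OF assms(3), of 1] by (auto simp: eventually_at_top_linorder)
  obtain X2 where X2: "\<And>x. x \<le> X2 \<Longrightarrow> dist (e x) a < 1"
    using tendstoD[OF assms(2), of 1] by (auto simp: eventually_at_bot_linorder)
  have "compact (e ` {X2..X1})"
    by (rule compact_continuous_image) (auto intro: continuous_on_subset[OF e])
  then obtain B where B: "\<forall>y\<in>e ` {X2..X1}. norm y \<le> B"
    using compact_imp_bounded bounded_iff by metis
  have "norm (e x) \<le> max B (max (norm b + 1) (norm a + 1))" for x
  proof -
    consider "X1 \<le> x" | "x \<le> X2" | "x \<in> {X2..X1}" by force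
    then show ?thesis
    proof cases
      case 1
      with X1 norm_triangle_ineq2[of "e x" b] show ?thesis by (force simp: dist_norm)
    next
      case 2
      with X2 norm_triangle_ineq2[of "e x" a] show ?thesis by (force simp: dist_norm)
    qed (use B in force)
  qed
  then show ?thesis using that by blast
qed

lemma continuous_bounded_on_bounded_curve:
  fixes \<phi> :: "complex \<Rightarrow> complex"
  assumes "continuous_on UNIV \<phi>" "\<And>x. cmod (e x) \<le> R"
  obtains B where "B \<ge> 0" "\<And>x. cmod (\<phi> (e x)) \<le> B"
proof -
  have "compact (\<phi> ` cball 0 R)"
    by (rule compact_continuous_image) (auto intro: continuous_on_subset[OF assms(1)])
  then obtain B where B: "\<forall>y\<in>\<phi> ` cball 0 R. norm y \<le> B"
    using compact_imp_bounded bounded_iff by metis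
  have "cmod (\<phi> (e x)) \<le> max B 0" for x using B assms(2)[of x] by force
  then show ?thesis using that[of "max B 0"] by simp
qed

lemma holomorphic_deriv_along_orbit:
  fixes f :: "complex \<Rightarrow> complex" and e e' :: "real \<Rightarrow> complex"
  assumes hol: "f holomorphic_on UNIV"
    and e: "\<And>x. (e has_vector_derivative e' x) (at x)" "(e \<longlongrightarrow> a) at_bot" "(e \<longlongrightarrow> b) at_top"
    and e': "\<And>x. e' x = c * cnj (f (e x))"
  defines "F x \<equiv> deriv f (e x)" and "F' x \<equiv> deriv (deriv f) (e x) * e' x"
  obtains B where "is_primitive F F'" "continuous_on UNIV F" "continuous_on UNIV F'"
    "\<And>x. cmod (F x) \<le> B" "\<And>x. cmod (F' x) \<le> B"
proof -
  have hol': "deriv f holomorphic_on UNIV" and hol'': "deriv (deriv f) holomorphic_on UNIV"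
    using hol by (auto intro: holomorphic_deriv)
  have cont: "continuous_on UNIV \<phi>" if "\<phi> holomorphic_on UNIV" for \<phi>
    using that by (rule holomorphic_on_imp_continuous_on)
  have e_cont: "continuous_on UNIV e"
    using e(1) by (meson continuous_at_imp_continuous_on has_vector_derivative_continuous)
  have cont_e: "continuous_on UNIV (\<lambda>x. \<phi> (e x))" if "\<phi> holomorphic_on UNIV" for \<phi>
    by (rule continuous_on_compose2[OF cont[OF that] e_cont]) auto
  obtain R where "\<And>x. cmod (e x) \<le> R"
    using bounded_if_tendsto_at_bot_at_top[OF e_cont e(2,3)] by blast
  then obtain B0 B1 B2 where B: "\<And>x. cmod (f (e x)) \<le> B0" "\<And>x. cmod (deriv f (e x)) \<le> B1"
    "\<And>x. cmod (deriv (deriv f) (e x)) \<le> B2" "0 \<le> B0" "0 \<le> B2"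
    by (metis continuous_bounded_on_bounded_curve cont hol hol' hol'')
  define M where "M = max B1 (B2 * (cmod c * B0))"
  have "cmod (F x) \<le> M" for x using B(2)[of x] by (simp add: F_def M_def le_max_iff_disj)
  moreover have "cmod (F' x) \<le> M" for x
  proof -
    have "cmod (F' x) = cmod (deriv (deriv f) (e x)) * (cmod c * cmod (f (e x)))"
      by (simp add: F'_def e' norm_mult)
    also have "\<dots> \<le> B2 * (cmod c * B0)"
      using B by (intro mult_mono mult_left_mono) auto
    finally show ?thesis by (simp add: M_def le_max_iff_disj)
  qed
  moreover have "continuous_on UNIV F'"
    unfolding F'_def e' by (intro continuous_intros cont_e hol hol'')
  moreover have "(F has_vector_derivative F' x) (at x)" for x
    using field_vector_diff_chain_at[OF e(1) holomorphic_derivI[OF hol' open_UNIV UNIV_I]]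
    by (simp add: F_def[abs_def] F'_def o_def mult.commute)
  moreover have "continuous_on UNIV F" using cont_e[OF hol'] by (simp add: F_def)
  ultimately show ?thesis using that is_primitive_if_has_vector_derivative by blast
qed

lemma norm_diff_square_le: "(cmod (a - b))\<^sup>2 \<le> 2 * (cmod a)\<^sup>2 + 2 * (cmod b)\<^sup>2"
proof -
  have "(cmod (a - b))\<^sup>2 \<le> (cmod a + cmod b)\<^sup>2"
    using norm_triangle_ineq4[of a b] by (intro power_mono) auto
  also have "\<dots> \<le> 2 * (cmod a)\<^sup>2 + 2 * (cmod b)\<^sup>2"
    using sum_squares_ge_zero[of "cmod a - cmod b" 0] by (simp add: power2_eq_square algebra_simps)
  finally show ?thesis .
qed

lemma borel_measurable_cnj [measurable (raw)]:
  fixes f :: "'a \<Rightarrow> complex"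
  assumes "f \<in> borel_measurable M"
  shows "(\<lambda>x. cnj (f x)) \<in> borel_measurable M"
  using borel_measurable_continuous_on[OF continuous_on_cnj[OF continuous_on_id] assms] by simp

lemma integrable_norm_diff_square:
  fixes g h F :: "real \<Rightarrow> complex"
  assumes [measurable]: "g \<in> borel_measurable lborel" "h \<in> borel_measurable lborel"
    "F \<in> borel_measurable lborel"
    and g: "integrable lborel (\<lambda>x. (cmod (g x))\<^sup>2)" and h: "integrable lborel (\<lambda>x. (cmod (h x))\<^sup>2)"
    and F: "\<And>x. cmod (F x) \<le> B"
  shows "integrable lborel (\<lambda>x. (cmod (g x - c * cnj (F x * h x)))\<^sup>2)"
proof (rule Bochner_Integration.integrable_bound)
  show "(\<lambda>x. (cmod (g x - c * cnj (F x * h x)))\<^sup>2) \<in> borel_measurable lborel" by measurable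
  show "integrable lborel (\<lambda>x. 2 * (cmod (g x))\<^sup>2 + 2 * ((cmod c * B)\<^sup>2 * (cmod (h x))\<^sup>2))"
    using g h by simp
  have bound: "(cmod (c * cnj (F x * h x)))\<^sup>2 \<le> (cmod c * B)\<^sup>2 * (cmod (h x))\<^sup>2" for x
  proof -
    have "cmod c * (cmod (F x) * cmod (h x)) \<le> cmod c * (B * cmod (h x))"
      using F[of x] by (intro mult_left_mono mult_right_mono) auto
    then show ?thesis
      unfolding norm_mult complex_mod_cnj power_mult_distrib[symmetric]
      by (intro power_mono) (auto simp: mult.assoc)
  qed
  show "AE x in lborel. norm ((cmod (g x - c * cnj (F x * h x)))\<^sup>2)
      \<le> norm (2 * (cmod (g x))\<^sup>2 + 2 * ((cmod c * B)\<^sup>2 * (cmod (h x))\<^sup>2))"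
  proof (intro AE_I2)
    fix x
    have "(cmod (g x - c * cnj (F x * h x)))\<^sup>2
        \<le> 2 * (cmod (g x))\<^sup>2 + 2 * (cmod (c * cnj (F x * h x)))\<^sup>2"
      by (rule norm_diff_square_le)
    also have "\<dots> \<le> 2 * (cmod (g x))\<^sup>2 + 2 * ((cmod c * B)\<^sup>2 * (cmod (h x))\<^sup>2)"
      using bound[of x] by simp
    finally show "norm ((cmod (g x - c * cnj (F x * h x)))\<^sup>2)
        \<le> norm (2 * (cmod (g x))\<^sup>2 + 2 * ((cmod c * B)\<^sup>2 * (cmod (h x))\<^sup>2))"
      by simp
  qed
qed

lemma integral_derivative_square_deriv_along_orbit_eq_0:
  fixes f :: "complex \<Rightarrow> complex" and e e' h g :: "real \<Rightarrow> complex"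
  assumes hol: "f holomorphic_on UNIV"
    and e: "\<And>x. (e has_vector_derivative e' x) (at x)" "(e \<longlongrightarrow> a) at_bot" "(e \<longlongrightarrow> b) at_top"
    and e': "\<And>x. e' x = c * cnj (f (e x))" and H1: "H1_weak h g"
  defines "G x \<equiv> 2 * g x * h x * deriv f (e x) + (h x)\<^sup>2 * (deriv (deriv f) (e x) * e' x)"
  shows "integrable lborel G" and "(\<integral>x. G x \<partial>lborel) = 0"
proof -
  have [measurable]: "h \<in> borel_measurable lborel" "g \<in> borel_measurable lborel"
    and h2: "integrable lborel (\<lambda>x. (cmod (h x))\<^sup>2)" and g2: "integrable lborel (\<lambda>x. (cmod (g x))\<^sup>2)"
    using H1 by (auto simp: H1_weak_def square_integrable_def)
  obtain K where hK: "AE x in lborel. h x = K x" and [measurable]: "K \<in> borel_measurable lborel"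
    and K: "is_primitive K g"
    using H1_weak_AE_eq_primitive[OF H1] by blast
  have K2: "integrable lborel (\<lambda>x. (cmod (K x))\<^sup>2)"
    using h2 hK by (subst integrable_cong_AE[symmetric]) (auto elim!: eventually_mono)
  obtain B where F: "is_primitive (\<lambda>x. deriv f (e x)) (\<lambda>x. deriv (deriv f) (e x) * e' x)"
    "continuous_on UNIV (\<lambda>x. deriv f (e x))" "continuous_on UNIV (\<lambda>x. deriv (deriv f) (e x) * e' x)"
    "\<And>x. cmod (deriv f (e x)) \<le> B" "\<And>x. cmod (deriv (deriv f) (e x) * e' x) \<le> B"
    by (rule holomorphic_deriv_along_orbit[OF hol e e']) blast
  have [measurable]: "(\<lambda>x. deriv f (e x)) \<in> borel_measurable lborel"
    "(\<lambda>x. deriv (deriv f) (e x) * e' x) \<in> borel_measurable lborel"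
    using F(2,3) by (simp_all add: borel_measurable_continuous_onI)
  have [measurable]: "G \<in> borel_measurable lborel" unfolding G_def by measurable
  note G_K = integral_derivative_square_mult_eq_0[OF K _ _ K2 g2 F(1) _ _ F(4,5)]
  have AE_eq: "AE x in lborel. 2 * g x * K x * deriv f (e x) + (K x)\<^sup>2 * (deriv (deriv f) (e x) * e' x) = G x"
    using hK by eventually_elim (simp add: G_def)
  show "integrable lborel G" "(\<integral>x. G x \<partial>lborel) = 0"
    using integrable_cong_AE_imp[OF G_K(1) _ AE_eq] integral_cong_AE[OF _ _ AE_eq] G_K(2) by simp_all
qed

theorem mainTheorem4:
  fixes f :: "complex \<Rightarrow> complex" and W :: "complex \<Rightarrow> real"
    and e e' e'' :: "real \<Rightarrow> complex" and am ap m :: complex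
  assumes "f holomorphic_on UNIV"
    and "\<And>z. W z = (cmod (f z))\<^sup>2"
    and "am \<noteq> ap"
    and "nondegenerate_zero W am" and "nondegenerate_zero W ap"
    and "heteroclinic W am ap e e' e''"
    and "cmod m = 1"
    and "\<And>x. e' x = complex_of_real (sqrt 2) * m * cnj (f (e x))"
  shows "\<forall>h g. H1_weak h g \<longrightarrow>
    (\<integral>x. (cmod (g x))\<^sup>2 + h x \<bullet> hess W (e x) (h x) \<partial>lborel) =
    (\<integral>x. (cmod (g x - complex_of_real (sqrt 2) * m * cnj (deriv f (e x) * h x)))\<^sup>2 \<partial>lborel)"
proof (intro allI impI)
  fix h g assume H1: "H1_weak h g"
  have e: "\<And>x. (e has_vector_derivative e' x) (at x)" "(e \<longlongrightarrow> am) at_bot" "(e \<longlongrightarrow> ap) at_top"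
    using assms(6) by (simp_all add: heteroclinic_def)
  define G where "G x = 2 * g x * h x * deriv f (e x) + (h x)\<^sup>2 * (deriv (deriv f) (e x) * e' x)"
    for x
  note G = integral_derivative_square_deriv_along_orbit_eq_0[OF assms(1) e assms(8) H1,
      folded G_def[abs_def]]
  obtain B where "continuous_on UNIV (\<lambda>x. deriv f (e x))" "\<And>x. cmod (deriv f (e x)) \<le> B"
    by (rule holomorphic_deriv_along_orbit[OF assms(1) e assms(8)]) blast
  then have "integrable lborel
      (\<lambda>x. (cmod (g x - complex_of_real (sqrt 2) * m * cnj (deriv f (e x) * h x)))\<^sup>2)"
    using H1 unfolding H1_weak_def square_integrable_def
    by (intro integrable_norm_diff_square) (auto intro: borel_measurable_continuous_onI)
  moreover have "(cmod (g x))\<^sup>2 + h x \<bullet> hess W (e x) (h x)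
      = (cmod (g x - complex_of_real (sqrt 2) * m * cnj (deriv f (e x) * h x)))\<^sup>2
        + sqrt 2 * Re (cnj m * G x)" for x
    unfolding hess_norm_square_holomorphic[OF assms(1,2)] G_def assms(8)
    by (rule completed_square_identity[OF assms(7)])
  ultimately show "(\<integral>x. (cmod (g x))\<^sup>2 + h x \<bullet> hess W (e x) (h x) \<partial>lborel) =
    (\<integral>x. (cmod (g x - complex_of_real (sqrt 2) * m * cnj (deriv f (e x) * h x)))\<^sup>2 \<partial>lborel)"
    using G by (simp add: Bochner_Integration.integral_add)
qed

end
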